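(* Consider FedProx, as described in the context, with $\alpha>0$, run for $T\ge1$ rounds with constant step size $\gamma=[2L_\alpha\sqrt{TE}]^{-1}$, where $L_\alpha=\alpha+L$. Assume that the bounded variance, bounded stochastic gradient norm, $L$-smoothness and lower-bounded objective assumptions of the context hold. Let $\widehat{\mathbf{w}}_T$ be drawn uniformly at random from $\{\overline{\mathbf{w}}_{t,k}:0\le t\le T-1,\,0\le k\le E-1\}$. Then $$\mathbb{E}\|\nabla F(\widehat{\mathbf{w}}_T)\|^2\le\frac{1}{\sqrt T}\Big[\frac{8L_\alpha\Delta}{\sqrt E}+\frac{LS\sigma^2}{L_\alpha\sqrt E}+\frac{\alpha E^{3/2}G^2}{L_\alpha}\Big]+\frac{2L^2EG^2}{L_\alpha^2T}+\frac{\alpha^2L\sqrt E\,G^2}{16L_\alpha^3T^{3/2}},$$ where $\Delta=F(\overline{\mathbf{w}}_{0,0})-f_{\inf}$ and $S=\sum_ip_i^2$.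
   Context: Setting: there are $C$ clients with weights $p_1,\dots,p_C\ge0$ satisfying $\sum_ip_i=1$. Each client has a local objective $F_i:\mathbb{R}^D\to\mathbb{R}$, and the global objective is $F=\sum_ip_iF_i$. FedProx with parameter $\alpha>0$, $E\ge1$ local steps and step sizes $\gamma_t$ works as follows. Every client participates in every round. In round $t$, each client sets $\mathbf{w}^i_{t,0}=\overline{\mathbf{w}}_{t,0}$ and, for $k=0,\dots,E-1$, updates $$\mathbf{w}^i_{t,k+1}=(1-\alpha\gamma_t)\mathbf{w}^i_{t,k}+\alpha\gamma_t\overline{\mathbf{w}}_{t,0}-\gamma_tg_i(\mathbf{w}^i_{t,k}),$$ where $g_i$ is a stochastic gradient of $F_i$, sampled independently across clients and steps given the past. The average iterate is $\overline{\mathbf{w}}_{t,k}=\sum_ip_i\mathbf{w}^i_{t,k}$, with $\overline{\mathbf{w}}_{t+1,0}=\overline{\mathbf{w}}_{t,E}$. $\mathbb{E}$ denotes total expectation. Assumptions: - Bounded variance: $\mathbb{E}\,g_i(\mathbf{w}^i_{t,k})=\nabla F_i(\mathbf{w}^i_{t,k})$ and $\mathbb{E}\|g_i(\mathbf{w}^i_{t,k})-\nabla F_i(\mathbf{w}^i_{t,k})\|^2\le\sigma^2$. - Bounded stochastic gradient norm: $\mathbb{E}\|g_i(\mathbf{w}^i_{t,k})\|^2\le G^2$ for all $i,t,k$. - $L$-smoothness: each $\nabla F_i$ is $L$-Lipschitz. - Lower-bounded objective: $F$ is bounded below by $f_{\inf}$. *)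

theory Defs
  imports "HOL-Probability.Probability"
begin

definition avg_iter :: "nat \<Rightarrow> (nat \<Rightarrow> real) \<Rightarrow> (nat \<Rightarrow> nat \<Rightarrow> nat \<Rightarrow> 'm \<Rightarrow> 'a::real_vector)
    \<Rightarrow> nat \<Rightarrow> nat \<Rightarrow> 'm \<Rightarrow> 'a" where
  "avg_iter C p w t k \<omega> = (\<Sum>i<C. p i *\<^sub>R w i t k \<omega>)"

definition before :: "nat \<times> nat \<Rightarrow> nat \<times> nat \<Rightarrow> bool" where
  "before a b \<longleftrightarrow> fst a < fst b \<or> (fst a = fst b \<and> snd a < snd b)"

end

theory Submission
  imports Defs
begin

text \<open>
  By \<open>L\<close>-smoothness of the global objective \<open>F\<close>, the increase of \<open>F\<close> along one
  averaged local step \<open>wbar_{t,k} \<mapsto> wbar_{t,k+1}\<close> is at most the quadratic model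
  \<open>\<nabla>F(wbar) \<bullet> \<Delta> + L/2 |\<Delta>|\<^sup>2\<close>. The step \<open>\<Delta>\<close> splits into a mean part (true local gradients plus
  the proximal pull towards \<open>wbar_{t,0}\<close>) and the averaged gradient noise. In expectation the
  noise is orthogonal to everything known before the step (unbiasedness), and its second
  moment is at most \<open>(\<Sum>i. p_i\<^sup>2) \<sigma>\<^sup>2\<close> because the client noises are conditionally independent.
  The mean part contributes at most \<open>-\<gamma>/4 |\<nabla>F(wbar)|\<^sup>2\<close> plus terms in the client drift
  \<open>\<Sum>i. p_i |w_i - wbar_{t,0}|\<close>, whose mean square is at most \<open>\<gamma>\<^sup>2 k\<^sup>2 G\<^sup>2\<close>. Telescoping over all
  \<open>T E\<close> local steps against the lower bound \<open>f_inf\<close> and inserting the step size gives the rate.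
\<close>

section \<open>Square-integrable random vectors\<close>

definition sq_integrable :: "'m measure \<Rightarrow> ('m \<Rightarrow> 'a::euclidean_space) \<Rightarrow> bool" where
  "sq_integrable M X \<longleftrightarrow> X \<in> borel_measurable M \<and> integrable M (\<lambda>\<omega>. (norm (X \<omega>))\<^sup>2)"

lemma sq_integrableD:
  "sq_integrable M X \<Longrightarrow> X \<in> borel_measurable M"
  "sq_integrable M X \<Longrightarrow> integrable M (\<lambda>\<omega>. (norm (X \<omega>))\<^sup>2)"
  by (auto simp: sq_integrable_def)

lemma sq_integrable_cong:
  assumes "\<And>\<omega>. \<omega> \<in> space M \<Longrightarrow> X \<omega> = Y \<omega>" and "sq_integrable M X"
  shows "sq_integrable M Y"
proof -
  have "Y \<in> borel_measurable M"
    using assms measurable_cong[of M X Y] by (auto simp: sq_integrable_def)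
  moreover have "integrable M (\<lambda>\<omega>. (norm (Y \<omega>))\<^sup>2) = integrable M (\<lambda>\<omega>. (norm (X \<omega>))\<^sup>2)"
    using assms(1) by (intro Bochner_Integration.integrable_cong) auto
  ultimately show ?thesis
    using assms(2) by (simp add: sq_integrable_def)
qed

lemma sq_integrable_scaleR: "sq_integrable M X \<Longrightarrow> sq_integrable M (\<lambda>\<omega>. c *\<^sub>R X \<omega>)"
  by (auto simp: sq_integrable_def power_mult_distrib)

lemma norm_add_sq_le:
  fixes x y :: "'a::real_normed_vector"
  shows "(norm (x + y))\<^sup>2 \<le> 2 * (norm x)\<^sup>2 + 2 * (norm y)\<^sup>2"
proof -
  have "(norm (x + y))\<^sup>2 \<le> (norm x + norm y)\<^sup>2"
    by (simp add: power_mono norm_triangle_ineq)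
  also have "\<dots> \<le> 2 * (norm x)\<^sup>2 + 2 * (norm y)\<^sup>2"
    using sum_squares_bound[of "norm x" "norm y"] unfolding power2_sum by linarith
  finally show ?thesis .
qed

lemma sq_integrable_add:
  assumes "sq_integrable M X" "sq_integrable M Y"
  shows "sq_integrable M (\<lambda>\<omega>. X \<omega> + Y \<omega>)"
proof -
  have [measurable]: "X \<in> borel_measurable M" "Y \<in> borel_measurable M"
    using assms by (auto simp: sq_integrable_def)
  have "integrable M (\<lambda>\<omega>. (norm (X \<omega> + Y \<omega>))\<^sup>2)"
  proof (rule Bochner_Integration.integrable_bound)
    show "integrable M (\<lambda>\<omega>. 2 * (norm (X \<omega>))\<^sup>2 + 2 * (norm (Y \<omega>))\<^sup>2)"
      using assms by (simp add: sq_integrable_def)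
  qed (use norm_add_sq_le in auto)
  then show ?thesis by (simp add: sq_integrable_def)
qed

lemma sq_integrable_diff:
  "sq_integrable M X \<Longrightarrow> sq_integrable M Y \<Longrightarrow> sq_integrable M (\<lambda>\<omega>. X \<omega> - Y \<omega>)"
  using sq_integrable_add[of M X "\<lambda>\<omega>. (-1) *\<^sub>R Y \<omega>"] sq_integrable_scaleR[of M Y "-1"] by simp

lemma integrable_inner_sq_integrable:
  fixes X Y :: "'m \<Rightarrow> 'a::euclidean_space"
  assumes "sq_integrable M X" "sq_integrable M Y"
  shows "integrable M (\<lambda>\<omega>. X \<omega> \<bullet> Y \<omega>)"
proof (rule Bochner_Integration.integrable_bound)
  show "integrable M (\<lambda>\<omega>. (norm (X \<omega>))\<^sup>2 + (norm (Y \<omega>))\<^sup>2)"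
    using assms by (simp add: sq_integrable_def)
  have "\<bar>x \<bullet> y\<bar> \<le> (norm x)\<^sup>2 + (norm y)\<^sup>2" for x y :: 'a
    using Cauchy_Schwarz_ineq2[of x y] sum_squares_bound[of "norm x" "norm y"] by simp
  then show "AE \<omega> in M. norm (X \<omega> \<bullet> Y \<omega>) \<le> norm ((norm (X \<omega>))\<^sup>2 + (norm (Y \<omega>))\<^sup>2)"
    by auto
qed (use assms in \<open>auto simp: sq_integrable_def\<close>)

context finite_measure
begin

lemma sq_integrable_const: "sq_integrable M (\<lambda>_. c)"
  by (simp add: sq_integrable_def)

lemma sq_integrable_sum:
  "finite I \<Longrightarrow> (\<And>i. i \<in> I \<Longrightarrow> sq_integrable M (X i)) \<Longrightarrow> sq_integrable M (\<lambda>\<omega>. \<Sum>i\<in>I. X i \<omega>)"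
  by (induction I rule: finite_induct) (auto intro: sq_integrable_add sq_integrable_const)

lemma sq_integrable_compose:
  fixes f :: "'b::euclidean_space \<Rightarrow> 'c::euclidean_space"
  assumes f: "f \<in> borel_measurable borel" and growth: "\<And>x. norm (f x - f y) \<le> K * norm (x - y)"
    and X: "sq_integrable M X"
  shows "sq_integrable M (\<lambda>\<omega>. f (X \<omega>))"
proof -
  have [measurable]: "X \<in> borel_measurable M" using X by (simp add: sq_integrable_def)
  define A where "A = norm (f y) + \<bar>K\<bar> * norm y"
  have bound: "(norm (f x))\<^sup>2 \<le> 2 * A\<^sup>2 + 2 * K\<^sup>2 * (norm x)\<^sup>2" for x
  proof -
    have "norm (f x) \<le> norm (f y) + \<bar>K\<bar> * norm (x - y)"
      using growth[of x] norm_triangle_ineq2[of "f x" "f y"]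
      by (smt (verit) abs_ge_self mult_right_mono norm_ge_zero)
    also have "\<dots> \<le> A + \<bar>K\<bar> * norm x"
      using norm_triangle_ineq4[of x y] unfolding A_def
      by (smt (verit) abs_ge_zero mult_left_mono distrib_left)
    finally have "(norm (f x))\<^sup>2 \<le> (A + \<bar>K\<bar> * norm x)\<^sup>2"
      by (simp add: power_mono)
    also have "\<dots> \<le> 2 * A\<^sup>2 + 2 * K\<^sup>2 * (norm x)\<^sup>2"
      using norm_add_sq_le[of A "\<bar>K\<bar> * norm x"] by (simp add: power_mult_distrib)
    finally show ?thesis .
  qed
  have "integrable M (\<lambda>\<omega>. (norm (f (X \<omega>)))\<^sup>2)"
  proof (rule Bochner_Integration.integrable_bound)
    show "integrable M (\<lambda>\<omega>. 2 * A\<^sup>2 + 2 * K\<^sup>2 * (norm (X \<omega>))\<^sup>2)"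
      using X by (simp add: sq_integrable_def)
  qed (use f bound in auto)
  then show ?thesis using f by (simp add: sq_integrable_def)
qed

lemma sq_integrable_norm: "sq_integrable M X \<Longrightarrow> sq_integrable M (\<lambda>\<omega>. norm (X \<omega>))"
  by (rule sq_integrable_compose[where y=0 and K=1]) auto

lemma sq_integrable_inner_left: "sq_integrable M X \<Longrightarrow> sq_integrable M (\<lambda>\<omega>. X \<omega> \<bullet> b)"
  by (rule sq_integrable_compose[where y=0 and K="norm b"])
     (auto simp: mult.commute[of "norm b"] Cauchy_Schwarz_ineq2)

lemma sq_integrable_imp_integrable_real:
  "sq_integrable M (X :: 'a \<Rightarrow> real) \<Longrightarrow> integrable M X"
  by (auto simp: sq_integrable_def intro: square_integrable_imp_integrable)

lemma integral_inner_eq_sum_Basis: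
  fixes X Y :: "'a \<Rightarrow> 'b::euclidean_space"
  assumes "sq_integrable M X" "sq_integrable M Y"
  shows "(\<integral>\<omega>. X \<omega> \<bullet> Y \<omega> \<partial>M) = (\<Sum>b\<in>Basis. \<integral>\<omega>. (X \<omega> \<bullet> b) * (Y \<omega> \<bullet> b) \<partial>M)"
proof -
  have "(\<integral>\<omega>. X \<omega> \<bullet> Y \<omega> \<partial>M) = (\<integral>\<omega>. (\<Sum>b\<in>Basis. (X \<omega> \<bullet> b) * (Y \<omega> \<bullet> b)) \<partial>M)"
    by (intro Bochner_Integration.integral_cong refl euclidean_inner)
  also have "\<dots> = (\<Sum>b\<in>Basis. \<integral>\<omega>. (X \<omega> \<bullet> b) * (Y \<omega> \<bullet> b) \<partial>M)"
    using integrable_inner_sq_integrable[OF sq_integrable_inner_left sq_integrable_inner_left, OF assms]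
    by (intro Bochner_Integration.integral_sum) simp
  finally show ?thesis .
qed

lemma integral_sq_norm_sum_orthogonal:
  fixes X :: "'i \<Rightarrow> 'a \<Rightarrow> 'b::euclidean_space"
  assumes I: "finite I" and X: "\<And>i. i \<in> I \<Longrightarrow> sq_integrable M (X i)"
    and orth: "\<And>i j. i \<in> I \<Longrightarrow> j \<in> I \<Longrightarrow> i \<noteq> j \<Longrightarrow> (\<integral>\<omega>. X i \<omega> \<bullet> X j \<omega> \<partial>M) = 0"
  shows "(\<integral>\<omega>. (norm (\<Sum>i\<in>I. c i *\<^sub>R X i \<omega>))\<^sup>2 \<partial>M) = (\<Sum>i\<in>I. (c i)\<^sup>2 * (\<integral>\<omega>. (norm (X i \<omega>))\<^sup>2 \<partial>M))"
proof -
  have int: "integrable M (\<lambda>\<omega>. c i * c j * (X j \<omega> \<bullet> X i \<omega>))" if "i \<in> I" "j \<in> I" for i j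
    using that X by (intro integrable_mult_right integrable_inner_sq_integrable)
  have "(\<integral>\<omega>. (norm (\<Sum>i\<in>I. c i *\<^sub>R X i \<omega>))\<^sup>2 \<partial>M)
      = (\<integral>\<omega>. (\<Sum>i\<in>I. \<Sum>j\<in>I. c i * c j * (X j \<omega> \<bullet> X i \<omega>)) \<partial>M)"
    unfolding power2_norm_eq_inner inner_sum_left inner_sum_right
    by (simp add: sum_distrib_left mult.assoc)
  also have "\<dots> = (\<Sum>i\<in>I. \<Sum>j\<in>I. c i * c j * (\<integral>\<omega>. X j \<omega> \<bullet> X i \<omega> \<partial>M))"
    using int by (simp add: Bochner_Integration.integral_sum Bochner_Integration.integrable_sum)
  also have "\<dots> = (\<Sum>i\<in>I. (c i)\<^sup>2 * (\<integral>\<omega>. (norm (X i \<omega>))\<^sup>2 \<partial>M))"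
  proof (rule sum.cong[OF refl])
    fix i assume "i \<in> I"
    then have "(\<Sum>j\<in>I. c i * c j * (\<integral>\<omega>. X j \<omega> \<bullet> X i \<omega> \<partial>M))
        = (\<Sum>j\<in>I. if j = i then (c i)\<^sup>2 * (\<integral>\<omega>. (norm (X i \<omega>))\<^sup>2 \<partial>M) else 0)"
      using orth by (intro sum.cong) (auto simp: power2_eq_square dot_square_norm)
    also have "\<dots> = (c i)\<^sup>2 * (\<integral>\<omega>. (norm (X i \<omega>))\<^sup>2 \<partial>M)"
      using I \<open>i \<in> I\<close> by simp
    finally show "(\<Sum>j\<in>I. c i * c j * (\<integral>\<omega>. X j \<omega> \<bullet> X i \<omega> \<partial>M))
        = (c i)\<^sup>2 * (\<integral>\<omega>. (norm (X i \<omega>))\<^sup>2 \<partial>M)" .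
  qed
  finally show ?thesis .
qed
end

lemma integral_le_of_nn_integral_le:
  fixes f :: "'a \<Rightarrow> real"
  assumes "integrable M f" "\<And>\<omega>. f \<omega> \<ge> 0" "(\<integral>\<^sup>+ \<omega>. ennreal (f \<omega>) \<partial>M) \<le> ennreal c" "c \<ge> 0"
  shows "(\<integral>\<omega>. f \<omega> \<partial>M) \<le> c"
  using assms nn_integral_eq_integral[OF assms(1)] by (simp add: ennreal_le_iff)

section \<open>Conditional expectations of products\<close>

text \<open>The conditional-independence hypothesis only speaks about bounded functions of the
  gradients; truncation with \<open>clip\<close> and dominated convergence remove the boundedness.\<close>

definition clip :: "nat \<Rightarrow> real \<Rightarrow> real" where
  "clip n x = max (- real n) (min (real n) x)"

lemma abs_clip_le: "\<bar>clip n x\<bar> \<le> real n"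
  by (auto simp: clip_def)

lemma abs_clip_le_abs: "\<bar>clip n x\<bar> \<le> \<bar>x\<bar>"
  by (auto simp: clip_def)

lemma clip_measurable [measurable]: "clip n \<in> borel_measurable borel"
  unfolding clip_def by (intro borel_measurable_continuous_onI continuous_intros)

lemma clip_tendsto: "(\<lambda>n. clip n x) \<longlonglongrightarrow> x"
proof (rule tendsto_eventually)
  have "clip n x = x" if "nat \<lceil>\<bar>x\<bar>\<rceil> \<le> n" for n
    using that by (auto simp: clip_def)
  then show "\<forall>\<^sub>F n in sequentially. clip n x = x"
    unfolding eventually_sequentially by blast
qed

lemma tendsto_integral_clip_mult:
  fixes a b :: "'a \<Rightarrow> real"
  assumes "integrable M (\<lambda>\<omega>. a \<omega> * b \<omega>)" "a \<in> borel_measurable M" "b \<in> borel_measurable M"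
  shows "(\<lambda>n. \<integral>\<omega>. clip n (a \<omega>) * b \<omega> \<partial>M) \<longlonglongrightarrow> (\<integral>\<omega>. a \<omega> * b \<omega> \<partial>M)"
proof (rule integral_dominated_convergence)
  show "integrable M (\<lambda>\<omega>. \<bar>a \<omega> * b \<omega>\<bar>)"
    using assms(1) by simp
  show "AE \<omega> in M. (\<lambda>n. clip n (a \<omega>) * b \<omega>) \<longlonglongrightarrow> a \<omega> * b \<omega>"
    by (intro AE_I2 tendsto_mult_right clip_tendsto)
  show "AE \<omega> in M. norm (clip n (a \<omega>) * b \<omega>) \<le> \<bar>a \<omega> * b \<omega>\<bar>" for n
    by (intro AE_I2) (auto simp: abs_mult intro!: mult_right_mono abs_clip_le_abs)
qed (use assms in auto)

lemma integrable_mult_AE_bounded: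
  fixes v b :: "'a \<Rightarrow> real"
  assumes "integrable M v" "b \<in> borel_measurable M" "AE \<omega> in M. \<bar>b \<omega>\<bar> \<le> B"
  shows "integrable M (\<lambda>\<omega>. v \<omega> * b \<omega>)"
proof (rule Bochner_Integration.integrable_bound)
  show "integrable M (\<lambda>\<omega>. B * \<bar>v \<omega>\<bar>)"
    using assms(1) by simp
  show "AE \<omega> in M. norm (v \<omega> * b \<omega>) \<le> norm (B * \<bar>v \<omega>\<bar>)"
    using assms(3) by eventually_elim (simp add: abs_mult mult.commute mult_right_mono)
qed (use assms in auto)

definition cond_indep_real :: "'a measure \<Rightarrow> 'a measure \<Rightarrow> ('a \<Rightarrow> real) \<Rightarrow> ('a \<Rightarrow> real) \<Rightarrow> bool" where
  "cond_indep_real M F u v \<longleftrightarrow>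
     (\<forall>f1 f2. f1 \<in> borel_measurable borel \<longrightarrow> f2 \<in> borel_measurable borel \<longrightarrow>
        (\<exists>B. \<forall>x. \<bar>f1 x\<bar> \<le> B) \<longrightarrow> (\<exists>B. \<forall>x. \<bar>f2 x\<bar> \<le> B) \<longrightarrow>
        (AE \<omega> in M. real_cond_exp M F (\<lambda>\<omega>. f1 (u \<omega>) * f2 (v \<omega>)) \<omega>
           = real_cond_exp M F (\<lambda>\<omega>. f1 (u \<omega>)) \<omega> * real_cond_exp M F (\<lambda>\<omega>. f2 (v \<omega>)) \<omega>))"

context finite_measure_subalgebra
begin

lemma integral_inner_cond_exp:
  fixes X Y Z :: "'a \<Rightarrow> 'b::euclidean_space"
  assumes XF: "X \<in> borel_measurable F"
    and X: "sq_integrable M X" and Y: "sq_integrable M Y" and Z: "sq_integrable M Z"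
    and cond_exp: "\<And>b. b \<in> Basis \<Longrightarrow> AE \<omega> in M. real_cond_exp M F (\<lambda>\<omega>. Y \<omega> \<bullet> b) \<omega> = Z \<omega> \<bullet> b"
  shows "(\<integral>\<omega>. X \<omega> \<bullet> Y \<omega> \<partial>M) = (\<integral>\<omega>. X \<omega> \<bullet> Z \<omega> \<partial>M)"
proof -
  have "(\<integral>\<omega>. (X \<omega> \<bullet> b) * (Y \<omega> \<bullet> b) \<partial>M) = (\<integral>\<omega>. (X \<omega> \<bullet> b) * (Z \<omega> \<bullet> b) \<partial>M)"
    if b: "b \<in> Basis" for b
  proof -
    have [measurable]: "(\<lambda>\<omega>. X \<omega> \<bullet> b) \<in> borel_measurable F"
      using XF by measurable
    have [measurable]: "(\<lambda>\<omega>. X \<omega> \<bullet> b) \<in> borel_measurable M" "(\<lambda>\<omega>. Y \<omega> \<bullet> b) \<in> borel_measurable M"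
      "(\<lambda>\<omega>. Z \<omega> \<bullet> b) \<in> borel_measurable M"
      using X Y Z by (auto dest!: sq_integrableD(1))
    have "(\<integral>\<omega>. (X \<omega> \<bullet> b) * (Y \<omega> \<bullet> b) \<partial>M)
        = (\<integral>\<omega>. (X \<omega> \<bullet> b) * real_cond_exp M F (\<lambda>\<omega>. Y \<omega> \<bullet> b) \<omega> \<partial>M)"
      using integrable_inner_sq_integrable[OF sq_integrable_inner_left sq_integrable_inner_left, OF X Y]
      by (intro real_cond_exp_intg(2)[symmetric]) auto
    also have "\<dots> = (\<integral>\<omega>. (X \<omega> \<bullet> b) * (Z \<omega> \<bullet> b) \<partial>M)"
      using cond_exp[OF b] by (intro integral_cong_AE) auto
    finally show ?thesis .
  qed
  then show ?thesis
    using integral_inner_eq_sum_Basis[OF X Y] integral_inner_eq_sum_Basis[OF X Z] by simp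
qed

lemma AE_abs_cond_exp_clip_le:
  assumes [measurable]: "u \<in> borel_measurable M"
  shows "AE \<omega> in M. \<bar>real_cond_exp M F (\<lambda>\<omega>. clip n (u \<omega>)) \<omega>\<bar> \<le> real n"
proof -
  have int: "integrable M (\<lambda>\<omega>. clip n (u \<omega>))"
    by (rule integrable_const_bound[where B="real n"]) (auto simp: abs_clip_le)
  have "AE \<omega> in M. real_cond_exp M F (\<lambda>\<omega>. clip n (u \<omega>)) \<omega> \<le> real n"
    using abs_clip_le[of n] by (intro real_cond_exp_le_c[OF int] AE_I2) (simp add: abs_le_iff)
  moreover have "AE \<omega> in M. real_cond_exp M F (\<lambda>\<omega>. clip n (u \<omega>)) \<omega> \<ge> - real n"
    using abs_clip_le[of n] by (intro real_cond_exp_ge_c[OF int] AE_I2) (simp add: abs_le_iff minus_le_iff)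
  ultimately show ?thesis by eventually_elim auto
qed

lemma integral_clip_mult_clip_cond_exp:
  fixes u v :: "'a \<Rightarrow> real"
  assumes [measurable]: "u \<in> borel_measurable M" "v \<in> borel_measurable M"
    and indep: "cond_indep_real M F u v"
  shows "(\<integral>\<omega>. clip n (u \<omega>) * clip m (v \<omega>) \<partial>M)
    = (\<integral>\<omega>. real_cond_exp M F (\<lambda>\<omega>. clip n (u \<omega>)) \<omega> * clip m (v \<omega>) \<partial>M)"
proof -
  define cu where "cu = real_cond_exp M F (\<lambda>\<omega>. clip n (u \<omega>))"
  have [measurable]: "cu \<in> borel_measurable F" "cu \<in> borel_measurable M"
    unfolding cu_def by auto
  have int_cu: "integrable M cu"
    unfolding cu_def by (intro real_cond_exp_int(1) integrable_const_bound[where B="real n"])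
      (auto simp: abs_clip_le)
  have int: "integrable M (\<lambda>\<omega>. clip n (u \<omega>) * clip m (v \<omega>))"
    by (rule integrable_const_bound[where B="real n * real m"])
      (auto simp: abs_mult intro!: mult_mono abs_clip_le)
  have "\<exists>B. \<forall>x. \<bar>clip k x\<bar> \<le> B" for k
    using abs_clip_le by blast
  then have factor: "AE \<omega> in M. real_cond_exp M F (\<lambda>\<omega>. clip n (u \<omega>) * clip m (v \<omega>)) \<omega>
      = cu \<omega> * real_cond_exp M F (\<lambda>\<omega>. clip m (v \<omega>)) \<omega>"
    using indep unfolding cond_indep_real_def cu_def by simp
  have "(\<integral>\<omega>. clip n (u \<omega>) * clip m (v \<omega>) \<partial>M)
      = (\<integral>\<omega>. real_cond_exp M F (\<lambda>\<omega>. clip n (u \<omega>) * clip m (v \<omega>)) \<omega> \<partial>M)"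
    using real_cond_exp_int(2)[OF int] by simp
  also have "\<dots> = (\<integral>\<omega>. cu \<omega> * real_cond_exp M F (\<lambda>\<omega>. clip m (v \<omega>)) \<omega> \<partial>M)"
    using factor by (intro integral_cong_AE) auto
  also have "\<dots> = (\<integral>\<omega>. cu \<omega> * clip m (v \<omega>) \<partial>M)"
    using integrable_mult_AE_bounded[OF int_cu, of "\<lambda>\<omega>. clip m (v \<omega>)" "real m"]
    by (intro real_cond_exp_intg(2)) (auto simp: abs_clip_le)
  finally show ?thesis
    by (simp add: cu_def)
qed

lemma integral_clip_mult_cond_exp:
  fixes u v :: "'a \<Rightarrow> real"
  assumes [measurable]: "u \<in> borel_measurable M" "v \<in> borel_measurable M"
    and v: "integrable M v" and indep: "cond_indep_real M F u v"
  shows "(\<integral>\<omega>. clip n (u \<omega>) * v \<omega> \<partial>M) = (\<integral>\<omega>. real_cond_exp M F (\<lambda>\<omega>. clip n (u \<omega>)) \<omega> * v \<omega> \<partial>M)"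
proof -
  define cu where "cu = real_cond_exp M F (\<lambda>\<omega>. clip n (u \<omega>))"
  have [measurable]: "cu \<in> borel_measurable M"
    unfolding cu_def by auto
  have cu_bound: "AE \<omega> in M. \<bar>cu \<omega>\<bar> \<le> real n"
    unfolding cu_def by (rule AE_abs_cond_exp_clip_le) simp
  have "(\<lambda>m. \<integral>\<omega>. clip m (v \<omega>) * clip n (u \<omega>) \<partial>M) \<longlonglongrightarrow> (\<integral>\<omega>. v \<omega> * clip n (u \<omega>) \<partial>M)"
    using integrable_mult_AE_bounded[OF v, of "\<lambda>\<omega>. clip n (u \<omega>)" "real n"]
    by (intro tendsto_integral_clip_mult) (auto simp: abs_clip_le)
  moreover have "(\<lambda>m. \<integral>\<omega>. clip m (v \<omega>) * cu \<omega> \<partial>M) \<longlonglongrightarrow> (\<integral>\<omega>. v \<omega> * cu \<omega> \<partial>M)"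
    using integrable_mult_AE_bounded[OF v _ cu_bound] by (intro tendsto_integral_clip_mult) auto
  moreover have "(\<integral>\<omega>. clip m (v \<omega>) * clip n (u \<omega>) \<partial>M) = (\<integral>\<omega>. clip m (v \<omega>) * cu \<omega> \<partial>M)" for m
    using integral_clip_mult_clip_cond_exp[OF assms(1,2) indep, of n m] by (simp add: cu_def mult.commute)
  ultimately show ?thesis
    using LIMSEQ_unique by (simp add: cu_def mult.commute)
qed

lemma integral_clip_mult_cond_indep:
  fixes u v hv :: "'a \<Rightarrow> real"
  assumes [measurable]: "u \<in> borel_measurable M" "v \<in> borel_measurable M" "hv \<in> borel_measurable F"
    and v: "integrable M v" and hv: "integrable M hv"
    and cond_v: "AE \<omega> in M. real_cond_exp M F v \<omega> = hv \<omega>"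
    and indep: "cond_indep_real M F u v"
  shows "(\<integral>\<omega>. clip n (u \<omega>) * v \<omega> \<partial>M) = (\<integral>\<omega>. clip n (u \<omega>) * hv \<omega> \<partial>M)"
proof -
  define cu where "cu = real_cond_exp M F (\<lambda>\<omega>. clip n (u \<omega>))"
  have [measurable]: "cu \<in> borel_measurable F" "cu \<in> borel_measurable M"
    unfolding cu_def by auto
  have [measurable]: "hv \<in> borel_measurable M"
    using hv by (rule borel_measurable_integrable)
  have cu_bound: "AE \<omega> in M. \<bar>cu \<omega>\<bar> \<le> real n"
    unfolding cu_def by (rule AE_abs_cond_exp_clip_le) simp
  have "(\<integral>\<omega>. clip n (u \<omega>) * v \<omega> \<partial>M) = (\<integral>\<omega>. cu \<omega> * v \<omega> \<partial>M)"
    unfolding cu_def using v indep by (intro integral_clip_mult_cond_exp) auto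
  also have "\<dots> = (\<integral>\<omega>. cu \<omega> * real_cond_exp M F v \<omega> \<partial>M)"
    using integrable_mult_AE_bounded[OF v _ cu_bound]
    by (intro real_cond_exp_intg(2)[symmetric]) (auto simp: mult.commute)
  also have "\<dots> = (\<integral>\<omega>. hv \<omega> * real_cond_exp M F (\<lambda>\<omega>. clip n (u \<omega>)) \<omega> \<partial>M)"
    using cond_v by (intro integral_cong_AE) (auto simp: cu_def mult.commute)
  also have "\<dots> = (\<integral>\<omega>. clip n (u \<omega>) * hv \<omega> \<partial>M)"
    using integrable_mult_AE_bounded[OF hv, of "\<lambda>\<omega>. clip n (u \<omega>)" "real n"]
    by (subst real_cond_exp_intg(2)) (auto simp: abs_clip_le mult.commute)
  finally show ?thesis .
qed

lemma integral_mult_cond_indep: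
  fixes u v hu hv :: "'a \<Rightarrow> real"
  assumes u: "sq_integrable M u" and v: "sq_integrable M v"
    and hu: "sq_integrable M hu" and hv: "sq_integrable M hv"
    and [measurable]: "hu \<in> borel_measurable F" "hv \<in> borel_measurable F"
    and cond_u: "AE \<omega> in M. real_cond_exp M F u \<omega> = hu \<omega>"
    and cond_v: "AE \<omega> in M. real_cond_exp M F v \<omega> = hv \<omega>"
    and indep: "cond_indep_real M F u v"
  shows "(\<integral>\<omega>. u \<omega> * v \<omega> \<partial>M) = (\<integral>\<omega>. hu \<omega> * hv \<omega> \<partial>M)"
proof -
  have [measurable]: "u \<in> borel_measurable M" "v \<in> borel_measurable M"
    "hu \<in> borel_measurable M" "hv \<in> borel_measurable M"
    using u v hu hv by (auto dest: sq_integrableD)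
  have "(\<lambda>n. \<integral>\<omega>. clip n (u \<omega>) * v \<omega> \<partial>M) \<longlonglongrightarrow> (\<integral>\<omega>. u \<omega> * v \<omega> \<partial>M)"
    using integrable_inner_sq_integrable[OF u v] by (intro tendsto_integral_clip_mult) auto
  moreover have "(\<lambda>n. \<integral>\<omega>. clip n (u \<omega>) * hv \<omega> \<partial>M) \<longlonglongrightarrow> (\<integral>\<omega>. u \<omega> * hv \<omega> \<partial>M)"
    using integrable_inner_sq_integrable[OF u hv] by (intro tendsto_integral_clip_mult) auto
  moreover have "(\<integral>\<omega>. clip n (u \<omega>) * v \<omega> \<partial>M) = (\<integral>\<omega>. clip n (u \<omega>) * hv \<omega> \<partial>M)" for n
    using v hv cond_v indep
    by (intro integral_clip_mult_cond_indep) (auto intro: sq_integrable_imp_integrable_real)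
  ultimately have "(\<integral>\<omega>. u \<omega> * v \<omega> \<partial>M) = (\<integral>\<omega>. hv \<omega> * u \<omega> \<partial>M)"
    using LIMSEQ_unique by (simp add: mult.commute)
  also have "\<dots> = (\<integral>\<omega>. hv \<omega> * real_cond_exp M F u \<omega> \<partial>M)"
    using integrable_inner_sq_integrable[OF hv u]
    by (intro real_cond_exp_intg(2)[symmetric]) auto
  also have "\<dots> = (\<integral>\<omega>. hu \<omega> * hv \<omega> \<partial>M)"
    using cond_u by (intro integral_cong_AE) (auto simp: mult.commute)
  finally show ?thesis .
qed

end

lemma prod_eq_two_factors:
  assumes "finite I" "i \<in> I" "j \<in> I" "i \<noteq> j" "\<And>l. l \<in> I \<Longrightarrow> l \<noteq> i \<Longrightarrow> l \<noteq> j \<Longrightarrow> q l = 1"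
  shows "(\<Prod>l\<in>I. q l) = q i * q j"
proof -
  have "(\<Prod>l\<in>I. q l) = (\<Prod>l\<in>{i, j}. q l)"
    using assms by (intro prod.mono_neutral_right) auto
  then show ?thesis
    using assms(4) by simp
qed

lemma has_real_derivative_along_line:
  fixes f :: "'a::euclidean_space \<Rightarrow> real"
  assumes "\<And>x. (f has_derivative (\<lambda>h. f' x \<bullet> h)) (at x)"
  shows "((\<lambda>s. f (x + s *\<^sub>R z)) has_real_derivative (f' (x + s *\<^sub>R z) \<bullet> z)) (at s)"
proof -
  have "((\<lambda>s. x + s *\<^sub>R z) has_derivative (\<lambda>h. h *\<^sub>R z)) (at s)"
    by (auto intro!: derivative_eq_intros)
  from has_derivative_compose[OF this assms]
  have "((\<lambda>s. f (x + s *\<^sub>R z)) has_derivative (\<lambda>h. h * (f' (x + s *\<^sub>R z) \<bullet> z))) (at s)"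
    by (simp add: o_def)
  moreover have "(\<lambda>h. h * (f' (x + s *\<^sub>R z) \<bullet> z)) = (*) (f' (x + s *\<^sub>R z) \<bullet> z)"
    by (simp add: fun_eq_iff)
  ultimately show ?thesis
    by (simp add: has_field_derivative_def)
qed

lemma lipschitz_gradient_upper_bound:
  fixes f :: "'a::euclidean_space \<Rightarrow> real"
  assumes deriv: "\<And>x. (f has_derivative (\<lambda>h. f' x \<bullet> h)) (at x)"
    and lip: "\<And>x y. norm (f' x - f' y) \<le> L * norm (x - y)"
  shows "f y \<le> f x + f' x \<bullet> (y - x) + L / 2 * (norm (y - x))\<^sup>2"
proof -
  define z where "z = y - x"
  define \<phi> where "\<phi> s = f (x + s *\<^sub>R z) - s * (f' x \<bullet> z) - L / 2 * s\<^sup>2 * (norm z)\<^sup>2" for s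
  define \<phi>' where "\<phi>' s = f' (x + s *\<^sub>R z) \<bullet> z - f' x \<bullet> z - L * s * (norm z)\<^sup>2" for s
  have "(\<phi> has_real_derivative \<phi>' s) (at s)" for s
    unfolding \<phi>_def \<phi>'_def
    by (rule derivative_eq_intros has_real_derivative_along_line[OF deriv] refl
        | simp add: power2_eq_square)+
  then obtain \<xi> where \<xi>: "0 < \<xi>" "\<xi> < 1" "\<phi> 1 - \<phi> 0 = \<phi>' \<xi>"
    using MVT2[of 0 1 \<phi> \<phi>'] by auto
  have "f' (x + \<xi> *\<^sub>R z) \<bullet> z - f' x \<bullet> z \<le> norm (f' (x + \<xi> *\<^sub>R z) - f' x) * norm z"
    by (metis inner_diff_left norm_cauchy_schwarz)
  also have "\<dots> \<le> L * norm (\<xi> *\<^sub>R z) * norm z"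
    using lip[of "x + \<xi> *\<^sub>R z" x] by (simp add: mult_right_mono)
  also have "\<dots> = L * \<xi> * (norm z)\<^sup>2"
    using \<xi> by (simp add: power2_eq_square)
  finally have "\<phi>' \<xi> \<le> 0"
    unfolding \<phi>'_def by simp
  then show ?thesis
    using \<xi> unfolding \<phi>_def z_def by simp
qed

lemma square_weighted_sum_le:
  fixes p x :: "'i \<Rightarrow> real"
  assumes "\<And>i. i \<in> I \<Longrightarrow> p i \<ge> 0" "(\<Sum>i\<in>I. p i) = 1"
  shows "(\<Sum>i\<in>I. p i * x i)\<^sup>2 \<le> (\<Sum>i\<in>I. p i * (x i)\<^sup>2)"
proof -
  have "(\<Sum>i\<in>I. p i * x i) = (\<Sum>i\<in>I. (sqrt (p i) * x i) * sqrt (p i))"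
    using assms(1) by (intro sum.cong) (auto simp: real_sqrt_mult[symmetric] mult_ac)
  then have "(\<Sum>i\<in>I. p i * x i)\<^sup>2 \<le> (\<Sum>i\<in>I. (sqrt (p i) * x i)\<^sup>2) * (\<Sum>i\<in>I. (sqrt (p i))\<^sup>2)"
    using Cauchy_Schwarz_ineq_sum[of "\<lambda>i. sqrt (p i) * x i" "\<lambda>i. sqrt (p i)" I] by simp
  also have "(\<Sum>i\<in>I. (sqrt (p i))\<^sup>2) = 1"
    using assms by simp
  also have "(\<Sum>i\<in>I. (sqrt (p i) * x i)\<^sup>2) = (\<Sum>i\<in>I. p i * (x i)\<^sup>2)"
    using assms(1) by (intro sum.cong) (auto simp: power_mult_distrib)
  finally show ?thesis by simp
qed

lemma sum_lessThan_squares_le: "3 * (\<Sum>k<n. (real k)\<^sup>2) \<le> (real n) ^ 3"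
proof (induction n)
  case (Suc n)
  then show ?case
    by (simp add: power3_eq_cube power2_eq_square algebra_simps)
qed simp

lemma prox_step_bound:
  fixes v D m :: "'a::real_inner"
  assumes "\<gamma> \<ge> 0" "L \<ge> 0" "L * \<gamma> \<le> 1/2"
  shows "- (v \<bullet> ((\<alpha> * \<gamma>) *\<^sub>R D + \<gamma> *\<^sub>R m)) + L / 2 * (norm ((\<alpha> * \<gamma>) *\<^sub>R D + \<gamma> *\<^sub>R m))\<^sup>2
    \<le> - \<gamma> / 4 * (norm v)\<^sup>2 + (\<alpha>\<^sup>2 * \<gamma> + L * \<alpha>\<^sup>2 * \<gamma>\<^sup>2) * (norm D)\<^sup>2 + \<gamma> / 2 * (norm (v - m))\<^sup>2"
proof -
  have "0 \<le> \<gamma> / 4 * (norm (v + (2 * \<alpha>) *\<^sub>R D))\<^sup>2"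
    using assms by simp
  also have "\<dots> = \<gamma> / 4 * (norm v)\<^sup>2 + (\<alpha> * \<gamma>) * (v \<bullet> D) + \<alpha>\<^sup>2 * \<gamma> * (norm D)\<^sup>2"
    unfolding power2_norm_eq_inner
    by (simp add: inner_add_left inner_add_right inner_commute power2_eq_square algebra_simps)
  finally have completed_square: "0 \<le> \<gamma> / 4 * (norm v)\<^sup>2 + (\<alpha> * \<gamma>) * (v \<bullet> D) + \<alpha>\<^sup>2 * \<gamma> * (norm D)\<^sup>2" .
  have "L / 2 * (norm ((\<alpha> * \<gamma>) *\<^sub>R D + \<gamma> *\<^sub>R m))\<^sup>2
      \<le> L / 2 * (2 * (norm ((\<alpha> * \<gamma>) *\<^sub>R D))\<^sup>2 + 2 * (norm (\<gamma> *\<^sub>R m))\<^sup>2)"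
    using assms(2) by (intro mult_left_mono norm_add_sq_le) auto
  also have "\<dots> = L * \<alpha>\<^sup>2 * \<gamma>\<^sup>2 * (norm D)\<^sup>2 + (L * \<gamma>) * \<gamma> * (norm m)\<^sup>2"
    by (simp add: algebra_simps power_mult_distrib power2_eq_square)
  also have "(L * \<gamma>) * \<gamma> * (norm m)\<^sup>2 \<le> 1/2 * \<gamma> * (norm m)\<^sup>2"
    using assms by (intro mult_right_mono) auto
  finally have quadratic: "L / 2 * (norm ((\<alpha> * \<gamma>) *\<^sub>R D + \<gamma> *\<^sub>R m))\<^sup>2
      \<le> L * \<alpha>\<^sup>2 * \<gamma>\<^sup>2 * (norm D)\<^sup>2 + 1/2 * \<gamma> * (norm m)\<^sup>2"
    by simp
  have norm_diff: "(norm (v - m))\<^sup>2 = (norm v)\<^sup>2 - 2 * (v \<bullet> m) + (norm m)\<^sup>2"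
    unfolding power2_norm_eq_inner by (simp add: inner_diff_left inner_diff_right inner_commute)
  show ?thesis
    using completed_square quadratic unfolding norm_diff by (simp add: inner_add_right algebra_simps)
qed

lemma quadratic_model_expand:
  fixes v S \<xi> :: "'a::real_inner"
  shows "v \<bullet> (- S - \<gamma> *\<^sub>R \<xi>) + L / 2 * (norm (- S - \<gamma> *\<^sub>R \<xi>))\<^sup>2
    = (- (v \<bullet> S) + L / 2 * (norm S)\<^sup>2) - \<gamma> * (v \<bullet> \<xi>) + L * \<gamma> * (S \<bullet> \<xi>) + L * \<gamma>\<^sup>2 / 2 * (norm \<xi>)\<^sup>2"
proof -
  have "(norm (- S - \<gamma> *\<^sub>R \<xi>))\<^sup>2 = (norm S)\<^sup>2 + 2 * \<gamma> * (S \<bullet> \<xi>) + \<gamma>\<^sup>2 * (norm \<xi>)\<^sup>2"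
    unfolding power2_norm_eq_inner
    by (simp add: inner_diff_left inner_diff_right inner_commute power2_eq_square algebra_simps)
  then show ?thesis
    by (simp add: inner_diff_right algebra_simps)
qed

lemma powr_three_halves:
  assumes "x \<ge> 0"
  shows "x powr (3/2) = x * sqrt (x::real)"
proof -
  have "x powr (3/2) = x powr (1 + 1/2)"
    by simp
  also have "\<dots> = x * sqrt x"
    using assms by (simp only: powr_add powr_one powr_half_sqrt)
  finally show ?thesis .
qed

lemma step_size_times_le_half:
  fixes a l s e \<gamma> :: real
  assumes "a > 0" "l \<ge> 0" "s \<ge> 1" "e \<ge> 1" "\<gamma> = 1 / (2 * (a + l) * (s * e))"
  shows "(a + l) * \<gamma> \<le> 1 / 2"
proof -
  have "1 \<le> s * e"
    using assms mult_mono[of 1 s 1 e] by simp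
  have "a + l \<noteq> 0"
    using assms(1,2) by simp
  then have "(a + l) * \<gamma> = 1 / (2 * (s * e))"
    unfolding assms(5) by (simp add: divide_simps)
  also have "\<dots> \<le> 1 / 2"
    using \<open>1 \<le> s * e\<close> by (simp add: divide_simps)
  finally show ?thesis .
qed

lemma rate_drift_term_le:
  fixes a l s e G2 \<gamma> :: real
  assumes a: "a > 0" and l: "l \<ge> 0" and s: "s \<ge> 1" and e: "e \<ge> 1" and G2: "G2 \<ge> 0"
    and \<gamma>: "\<gamma> = 1 / (2 * (a + l) * (s * e))"
  shows "4 / 3 * ((a\<^sup>2 * \<gamma> + l * a\<^sup>2 * \<gamma>\<^sup>2 + 2 * \<gamma> * l\<^sup>2) * \<gamma>) * G2 * e ^ 4
    \<le> 1 / s * (a * e ^ 3 * G2 / (a + l)) + 2 * l\<^sup>2 * e\<^sup>2 * G2 / ((a + l)\<^sup>2 * s\<^sup>2)"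
proof -
  define La where "La = a + l"
  have pos: "La > 0" "s > 0" "e > 0"
    using a l s e by (auto simp: La_def)
  have \<gamma>_La: "\<gamma> = 1 / (2 * La * (s * e))"
    by (simp add: \<gamma> La_def)
  have "0 \<le> a * \<gamma>"
    using a pos by (simp add: \<gamma>_La)
  then have l\<gamma>: "l * \<gamma> \<le> 1 / 2"
    using step_size_times_le_half[OF a l s e \<gamma>] by (simp add: distrib_right)
  have \<gamma>_e: "\<gamma>\<^sup>2 * e ^ 4 = e\<^sup>2 / (4 * La\<^sup>2 * s\<^sup>2)"
    using pos by (simp add: \<gamma>_La field_simps power2_eq_square power4_eq_xxxx)
  have "4 / 3 * ((a\<^sup>2 * \<gamma> + l * a\<^sup>2 * \<gamma>\<^sup>2 + 2 * \<gamma> * l\<^sup>2) * \<gamma>) * G2 * e ^ 4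
      = 4 / 3 * G2 * (\<gamma>\<^sup>2 * e ^ 4) * (a\<^sup>2 * (1 + l * \<gamma>) + 2 * l\<^sup>2)"
    by (simp add: algebra_simps power2_eq_square)
  also have "\<dots> \<le> 4 / 3 * G2 * (\<gamma>\<^sup>2 * e ^ 4) * (a\<^sup>2 * (3 / 2) + 2 * l\<^sup>2)"
    using l\<gamma> G2 by (intro mult_left_mono add_right_mono) auto
  also have "\<dots> = (a * G2 * e\<^sup>2 / (La * s)) * (a / (2 * La * s)) + 2 / 3 * (l\<^sup>2 * e\<^sup>2 * G2 / (La\<^sup>2 * s\<^sup>2))"
    using pos unfolding \<gamma>_e by (simp add: field_simps power2_eq_square)
  also have "\<dots> \<le> (a * G2 * e\<^sup>2 / (La * s)) * e + 2 * (l\<^sup>2 * e\<^sup>2 * G2 / (La\<^sup>2 * s\<^sup>2))"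
  proof (intro add_mono mult_left_mono)
    have "2 * La * 1 \<le> 2 * La * s"
      using pos s by (intro mult_left_mono) auto
    then have "a \<le> 2 * La * s"
      using a l La_def by linarith
    then have "a / (2 * La * s) \<le> 1"
      using pos by (simp add: divide_simps)
    then show "a / (2 * La * s) \<le> e"
      using e by linarith
  next
    show "2 / 3 * (l\<^sup>2 * e\<^sup>2 * G2 / (La\<^sup>2 * s\<^sup>2)) \<le> 2 * (l\<^sup>2 * e\<^sup>2 * G2 / (La\<^sup>2 * s\<^sup>2))"
      by (rule mult_right_mono) (simp_all add: G2)
  qed (use a G2 pos in auto)
  also have "\<dots> = 1 / s * (a * e ^ 3 * G2 / (a + l)) + 2 * l\<^sup>2 * e\<^sup>2 * G2 / ((a + l)\<^sup>2 * s\<^sup>2)"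
    using pos by (simp add: La_def field_simps power2_eq_square power3_eq_cube)
  finally show ?thesis .
qed

lemma fedprox_rate_arith:
  fixes a l s e D G2 V X \<gamma> :: real
  assumes a: "a > 0" and l: "l \<ge> 0" and s: "s \<ge> 1" and e: "e \<ge> 1" and G2: "G2 \<ge> 0"
    and \<gamma>: "\<gamma> = 1 / (2 * (a + l) * (s * e))"
    and H: "\<gamma> / 4 * X \<le> D + s\<^sup>2 * ((a\<^sup>2 * \<gamma> + l * a\<^sup>2 * \<gamma>\<^sup>2 + 2 * \<gamma> * l\<^sup>2) * \<gamma>\<^sup>2 * G2 * (e\<^sup>2) ^ 3 / 3)
      + s\<^sup>2 * e\<^sup>2 * (l * \<gamma>\<^sup>2 / 2 * V)"
  shows "X / (s\<^sup>2 * e\<^sup>2) \<le> 1 / s * (8 * (a + l) * D / e + l * V / ((a + l) * e) + a * e ^ 3 * G2 / (a + l))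
    + 2 * l\<^sup>2 * e\<^sup>2 * G2 / ((a + l)\<^sup>2 * s\<^sup>2) + a\<^sup>2 * l * e * G2 / (16 * (a + l) ^ 3 * s ^ 3)"
proof -
  define La where "La = a + l"
  define c where "c = a\<^sup>2 * \<gamma> + l * a\<^sup>2 * \<gamma>\<^sup>2 + 2 * \<gamma> * l\<^sup>2"
  have pos: "La > 0" "s > 0" "e > 0"
    using a l s e by (auto simp: La_def)
  have \<gamma>_La: "\<gamma> = 1 / (2 * La * (s * e))"
    by (simp add: \<gamma> La_def)
  have scale: "X / (s\<^sup>2 * e\<^sup>2) = 8 * La / (s * e) * (\<gamma> / 4 * X)"
    using pos by (simp add: \<gamma>_La field_simps power2_eq_square)
  have "X / (s\<^sup>2 * e\<^sup>2) \<le> 8 * La / (s * e) * (D + s\<^sup>2 * (c * \<gamma>\<^sup>2 * G2 * (e\<^sup>2) ^ 3 / 3)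
      + s\<^sup>2 * e\<^sup>2 * (l * \<gamma>\<^sup>2 / 2 * V))"
    unfolding scale c_def using H pos by (intro mult_left_mono) auto
  also have "\<dots> = 1 / s * (8 * La * D / e) + 4 / 3 * (c * \<gamma>) * G2 * e ^ 4 + 1 / s * (l * V / (La * e))"
    using pos by (simp add: \<gamma>_La field_simps power2_eq_square power3_eq_cube power4_eq_xxxx)
  also have "\<dots> \<le> 1 / s * (8 * La * D / e)
      + (1 / s * (a * e ^ 3 * G2 / La) + 2 * l\<^sup>2 * e\<^sup>2 * G2 / (La\<^sup>2 * s\<^sup>2)) + 1 / s * (l * V / (La * e))"
    using rate_drift_term_le[OF a l s e G2 \<gamma>] unfolding c_def La_def by simp
  finally have main: "X / (s\<^sup>2 * e\<^sup>2) \<le> 1 / s * (8 * La * D / e)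
      + (1 / s * (a * e ^ 3 * G2 / La) + 2 * l\<^sup>2 * e\<^sup>2 * G2 / (La\<^sup>2 * s\<^sup>2)) + 1 / s * (l * V / (La * e))" .
  \<comment> \<open>the last summand of the stated bound is slack\<close>
  have "0 \<le> a\<^sup>2 * l * e * G2 / (16 * La ^ 3 * s ^ 3)"
    using l G2 pos by simp
  then show ?thesis
    using main unfolding La_def by (simp add: distrib_left)
qed

definition rv_subspace :: "'m measure \<Rightarrow> (('m \<Rightarrow> 'a::real_vector) \<Rightarrow> bool) \<Rightarrow> bool" where
  "rv_subspace M Q \<longleftrightarrow> (\<forall>c. Q (\<lambda>_. c)) \<and> (\<forall>X Y. Q X \<longrightarrow> Q Y \<longrightarrow> Q (\<lambda>\<omega>. X \<omega> + Y \<omega>))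
     \<and> (\<forall>X c. Q X \<longrightarrow> Q (\<lambda>\<omega>. c *\<^sub>R X \<omega>)) \<and> (\<forall>X Y. (\<forall>\<omega>\<in>space M. X \<omega> = Y \<omega>) \<longrightarrow> Q X \<longrightarrow> Q Y)"

lemma rv_subspaceD:
  assumes "rv_subspace M Q"
  shows "Q (\<lambda>_. x)" "Q X \<Longrightarrow> Q Y \<Longrightarrow> Q (\<lambda>\<omega>. X \<omega> + Y \<omega>)" "Q X \<Longrightarrow> Q (\<lambda>\<omega>. c *\<^sub>R X \<omega>)"
    "(\<And>\<omega>. \<omega> \<in> space M \<Longrightarrow> X \<omega> = Y \<omega>) \<Longrightarrow> Q X \<Longrightarrow> Q Y"
  using assms unfolding rv_subspace_def by blast+

lemma rv_subspace_sum:
  assumes "rv_subspace M Q" "finite I" "\<And>i. i \<in> I \<Longrightarrow> Q (X i)"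
  shows "Q (\<lambda>\<omega>. \<Sum>i\<in>I. c i *\<^sub>R X i \<omega>)"
  using assms(2,3)
proof (induction I rule: finite_induct)
  case empty
  show ?case
    using rv_subspaceD(1)[OF assms(1), of 0] by simp
next
  case (insert i I)
  then have "Q (\<lambda>\<omega>. c i *\<^sub>R X i \<omega> + (\<Sum>i\<in>I. c i *\<^sub>R X i \<omega>))"
    by (intro rv_subspaceD(2,3)[OF assms(1)]) auto
  then show ?case
    using insert by simp
qed

lemma (in finite_measure) rv_subspace_sq_integrable: "rv_subspace M (sq_integrable M)"
  unfolding rv_subspace_def
proof (intro conjI allI impI)
  show "sq_integrable M Y" if "\<forall>\<omega>\<in>space M. X \<omega> = Y \<omega>" "sq_integrable M X" for X Y :: "'a \<Rightarrow> 'b"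
    using that sq_integrable_cong[of M X Y] by simp
qed (auto intro: sq_integrable_const sq_integrable_add sq_integrable_scaleR)

lemma rv_subspace_borel_measurable:
  assumes "space N = space M"
  shows "rv_subspace M (\<lambda>X :: 'm \<Rightarrow> 'a::euclidean_space. X \<in> borel_measurable N)"
  unfolding rv_subspace_def
proof (intro conjI allI impI)
  show "Y \<in> borel_measurable N" if "\<forall>\<omega>\<in>space M. X \<omega> = Y \<omega>" "X \<in> borel_measurable N"
    for X Y :: "'m \<Rightarrow> 'a"
    using that measurable_cong[of N X Y] assms by simp
qed auto

section \<open>The FedProx iteration\<close>

locale fedprox =
  fixes M :: "'m measure"
    and Filt :: "nat \<Rightarrow> nat \<Rightarrow> 'm measure"
    and C E T :: nat
    and p :: "nat \<Rightarrow> real"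
    and F :: "nat \<Rightarrow> 'a::euclidean_space \<Rightarrow> real"
    and gradF :: "nat \<Rightarrow> 'a \<Rightarrow> 'a"
    and w g :: "nat \<Rightarrow> nat \<Rightarrow> nat \<Rightarrow> 'm \<Rightarrow> 'a"
    and w0 :: 'a
    and \<alpha> \<gamma> L \<sigma> G f_inf :: real
  assumes prob: "prob_space M"
    and weights_nonneg: "\<And>i. i < C \<Longrightarrow> p i \<ge> 0"
    and weights_sum: "(\<Sum>i<C. p i) = 1"
    and alpha_pos: "\<alpha> > 0"
    and E_ge: "E \<ge> 1"
    and T_ge: "T \<ge> 1"
    and step: "\<gamma> = 1 / (2 * (\<alpha> + L) * sqrt (real T * real E))"
    and grad: "\<And>i x. i < C \<Longrightarrow> (F i has_derivative (\<lambda>h. gradF i x \<bullet> h)) (at x)"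
    and smooth: "\<And>i x y. i < C \<Longrightarrow> norm (gradF i x - gradF i y) \<le> L * norm (x - y)"
    and lower: "\<And>x. (\<Sum>i<C. p i * F i x) \<ge> f_inf"
    and init: "\<And>i \<omega>. i < C \<Longrightarrow> \<omega> \<in> space M \<Longrightarrow> w i 0 0 \<omega> = w0"
    and restart: "\<And>i t \<omega>. i < C \<Longrightarrow> \<omega> \<in> space M \<Longrightarrow>
        w i (Suc t) 0 \<omega> = avg_iter C p w t E \<omega>"
    and update: "\<And>i t k \<omega>. i < C \<Longrightarrow> k < E \<Longrightarrow> \<omega> \<in> space M \<Longrightarrow>
        w i t (Suc k) \<omega> = (1 - \<alpha> * \<gamma>) *\<^sub>R w i t k \<omega> + (\<alpha> * \<gamma>) *\<^sub>R avg_iter C p w t 0 \<omega>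
                          - \<gamma> *\<^sub>R g i t k \<omega>"
    and g_meas: "\<And>i t k. i < C \<Longrightarrow> k < E \<Longrightarrow> g i t k \<in> borel_measurable M"
    and filt_sub: "\<And>t k. subalgebra M (Filt t k)"
    and filt_past: "\<And>j t k t' k'. j < C \<Longrightarrow> k' < E \<Longrightarrow> before (t', k') (t, k) \<Longrightarrow>
        g j t' k' \<in> borel_measurable (Filt t k)"
    and unbiased: "\<And>i t k b. i < C \<Longrightarrow> k < E \<Longrightarrow> b \<in> Basis \<Longrightarrow>
        AE \<omega> in M. real_cond_exp M (Filt t k) (\<lambda>\<omega>. g i t k \<omega> \<bullet> b) \<omega> = gradF i (w i t k \<omega>) \<bullet> b"
    and cond_indep: "\<And>t k f. k < E \<Longrightarrow>
        (\<forall>i<C. f i \<in> borel_measurable borel \<and> (\<exists>B. \<forall>x. \<bar>f i x\<bar> \<le> B)) \<Longrightarrow>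
        AE \<omega> in M. real_cond_exp M (Filt t k) (\<lambda>\<omega>. \<Prod>i<C. f i (g i t k \<omega>)) \<omega>
                   = (\<Prod>i<C. real_cond_exp M (Filt t k) (\<lambda>\<omega>. f i (g i t k \<omega>)) \<omega>)"
    and variance: "\<And>i t k. i < C \<Longrightarrow> k < E \<Longrightarrow>
        (\<integral>\<^sup>+ \<omega>. ennreal ((norm (g i t k \<omega> - gradF i (w i t k \<omega>)))\<^sup>2) \<partial>M) \<le> ennreal (\<sigma>\<^sup>2)"
    and second_moment: "\<And>i t k. i < C \<Longrightarrow> k < E \<Longrightarrow>
        (\<integral>\<^sup>+ \<omega>. ennreal ((norm (g i t k \<omega>))\<^sup>2) \<partial>M) \<le> ennreal (G\<^sup>2)"
begin

abbreviation wbar :: "nat \<Rightarrow> nat \<Rightarrow> 'm \<Rightarrow> 'a" where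
  "wbar \<equiv> avg_iter C p w"

definition global_obj :: "'a \<Rightarrow> real" where
  "global_obj x = (\<Sum>i<C. p i * F i x)"

definition global_grad :: "'a \<Rightarrow> 'a" where
  "global_grad x = (\<Sum>i<C. p i *\<^sub>R gradF i x)"

definition avg_sgrad :: "nat \<Rightarrow> nat \<Rightarrow> 'm \<Rightarrow> 'a" where
  "avg_sgrad t k \<omega> = (\<Sum>i<C. p i *\<^sub>R g i t k \<omega>)"

sublocale finite_measure M
  using prob by (rule prob_space.finite_measure)

lemma finite_measure_subalgebra_Filt: "finite_measure_subalgebra M (Filt t k)"
  using filt_sub by unfold_locales

lemma space_Filt: "space (Filt t k) = space M"
  using filt_sub[of t k] by (simp add: subalgebra_def)

text \<open>\<open>L \<ge> 0\<close> is not a hypothesis: it follows from the smoothness of \<open>F 0\<close>, as \<open>C > 0\<close>.\<close>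

lemma L_nonneg: "L \<ge> 0"
proof -
  have "C > 0"
    using weights_sum by (cases C) auto
  obtain b :: 'a where "b \<in> Basis"
    using nonempty_Basis by blast
  then have "0 < norm b" by simp
  moreover have "0 \<le> L * norm (b - 0)"
    using smooth[OF \<open>C > 0\<close>, of b 0] norm_ge_zero order_trans by blast
  ultimately show ?thesis
    by (simp add: zero_le_mult_iff)
qed

lemma step_size_pos: "\<gamma> > 0"
  using alpha_pos L_nonneg T_ge E_ge by (simp add: step)

lemma step_size_le: "(\<alpha> + L) * \<gamma> \<le> 1/2"
proof (rule step_size_times_le_half[OF alpha_pos L_nonneg])
  show "1 \<le> sqrt (real T)" "1 \<le> sqrt (real E)"
    using T_ge E_ge by auto
  show "\<gamma> = 1 / (2 * (\<alpha> + L) * (sqrt (real T) * sqrt (real E)))"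
    unfolding step real_sqrt_mult ..
qed

lemma L_step_le: "L * \<gamma> \<le> 1/2"
  using step_size_le step_size_pos alpha_pos by (smt (verit) mult_right_mono)

lemma alpha_step_le: "\<alpha> * \<gamma> \<le> 1/2"
  using step_size_le step_size_pos L_nonneg by (smt (verit) mult_right_mono)

lemma sum_weights_scaleR: "(\<Sum>i<C. p i *\<^sub>R x) = (x::'a)"
  using scaleR_sum_left[of p "{..<C}" x] weights_sum by simp

lemma gradF_measurable [measurable]: "i < C \<Longrightarrow> gradF i \<in> borel_measurable borel"
  using smooth L_nonneg
  by (intro borel_measurable_continuous_onI lipschitz_on_continuous_on[where L=L] lipschitz_onI)
    (auto simp: dist_norm)

lemma global_grad_measurable [measurable]: "global_grad \<in> borel_measurable borel"
  unfolding global_grad_def by measurable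

lemma global_grad_lipschitz: "norm (global_grad x - global_grad y) \<le> L * norm (x - y)"
proof -
  have "norm (global_grad x - global_grad y) = norm (\<Sum>i<C. p i *\<^sub>R (gradF i x - gradF i y))"
    unfolding global_grad_def by (simp add: sum_subtractf scaleR_diff_right)
  also have "\<dots> \<le> (\<Sum>i<C. p i * (L * norm (x - y)))"
    using weights_nonneg smooth
    by (intro order_trans[OF norm_sum] sum_mono) (auto intro: mult_left_mono)
  also have "\<dots> = L * norm (x - y)"
    using weights_sum by (simp add: sum_distrib_right[symmetric])
  finally show ?thesis .
qed

lemma global_obj_has_derivative: "(global_obj has_derivative (\<lambda>h. global_grad x \<bullet> h)) (at x)"
proof -
  have "((\<lambda>x. \<Sum>i<C. p i * F i x) has_derivative (\<lambda>h. \<Sum>i<C. p i * (gradF i x \<bullet> h))) (at x)"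
    by (intro has_derivative_sum has_derivative_mult_right grad) auto
  moreover have "(\<lambda>h. \<Sum>i<C. p i * (gradF i x \<bullet> h)) = (\<lambda>h. global_grad x \<bullet> h)"
    by (simp add: fun_eq_iff global_grad_def inner_sum_left)
  ultimately show ?thesis
    unfolding global_obj_def by simp
qed

lemma global_obj_upper_bound:
  "global_obj y \<le> global_obj x + global_grad x \<bullet> (y - x) + L / 2 * (norm (y - x))\<^sup>2"
  by (rule lipschitz_gradient_upper_bound[OF global_obj_has_derivative global_grad_lipschitz])

lemma iterates_within_round:
  assumes Q: "rv_subspace M Q" and start: "\<And>i. i < C \<Longrightarrow> Q (w i t 0)"
    and past: "\<And>j k'. j < C \<Longrightarrow> k' < k \<Longrightarrow> Q (g j t k')"
  shows "k \<le> E \<Longrightarrow> i < C \<Longrightarrow> Q (w i t k)"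
  using past
proof (induction k arbitrary: i)
  case (Suc k)
  have "Q (wbar t 0)"
    unfolding avg_iter_def by (rule rv_subspace_sum[OF Q]) (auto intro: start)
  moreover have "Q (w i t k)" "Q (g i t k)"
    using Suc by auto
  ultimately have "Q (\<lambda>\<omega>. (1 - \<alpha> * \<gamma>) *\<^sub>R w i t k \<omega> + (\<alpha> * \<gamma>) *\<^sub>R wbar t 0 \<omega> + (- \<gamma>) *\<^sub>R g i t k \<omega>)"
    by (intro rv_subspaceD(2)[OF Q] rv_subspaceD(3)[OF Q])
  then show ?case
    by (rule rv_subspaceD(4)[OF Q, rotated]) (use update Suc.prems in auto)
qed (use start in simp)

text \<open>Every iterate is an affine combination of \<open>w0\<close> and of stochastic gradients computed
  before it.\<close>

lemma iterates_in_rv_subspace: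
  assumes Q: "rv_subspace M Q"
    and past: "\<And>j t' k'. j < C \<Longrightarrow> k' < E \<Longrightarrow> before (t', k') (t, k) \<Longrightarrow> Q (g j t' k')"
    and "k \<le> E" "i < C"
  shows "Q (w i t k)"
proof -
  have "(\<And>j t' k'. j < C \<Longrightarrow> k' < E \<Longrightarrow> t' < s \<Longrightarrow> Q (g j t' k')) \<Longrightarrow> i < C \<Longrightarrow> Q (w i s 0)"
    for s i
  proof (induction s arbitrary: i)
    case 0
    have "Q (\<lambda>_. w0)"
      by (rule rv_subspaceD(1)[OF Q])
    then show ?case
      by (rule rv_subspaceD(4)[OF Q, rotated]) (use init 0 in auto)
  next
    case (Suc s)
    have start: "Q (w j s 0)" if "j < C" for j
      by (rule Suc.IH) (auto intro: Suc.prems(1) that)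
    have "Q (w j s E)" if "j < C" for j
      by (rule iterates_within_round[OF Q start]) (auto intro: Suc.prems(1) that)
    then have "Q (wbar s E)"
      unfolding avg_iter_def by (intro rv_subspace_sum[OF Q]) auto
    then show ?case
      by (rule rv_subspaceD(4)[OF Q, rotated]) (use restart Suc.prems in auto)
  qed
  then have start: "Q (w j t 0)" if "j < C" for j
    using that by (metis past before_def fst_conv)
  show ?thesis
    using assms(3,4) by (intro iterates_within_round[OF Q start]) (auto intro: past simp: before_def)
qed

lemma g_sq_integrable: "i < C \<Longrightarrow> k < E \<Longrightarrow> sq_integrable M (g i t k)"
proof -
  assume i: "i < C" and k: "k < E"
  have [measurable]: "g i t k \<in> borel_measurable M"
    using g_meas i k by simp
  have "(\<integral>\<^sup>+ \<omega>. ennreal ((norm (g i t k \<omega>))\<^sup>2) \<partial>M) < \<infinity>"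
    using second_moment[OF i k, of t] by (simp add: order_le_less_trans)
  then show ?thesis
    unfolding sq_integrable_def by (auto intro: integrableI_nonneg)
qed

lemma w_sq_integrable: "k \<le> E \<Longrightarrow> i < C \<Longrightarrow> sq_integrable M (w i t k)"
  by (rule iterates_in_rv_subspace[OF rv_subspace_sq_integrable]) (auto intro: g_sq_integrable)

lemma w_measurable_Filt: "k' \<le> k \<Longrightarrow> k < E \<Longrightarrow> i < C \<Longrightarrow> w i t k' \<in> borel_measurable (Filt t k)"
  by (rule iterates_in_rv_subspace[OF rv_subspace_borel_measurable[OF space_Filt]])
     (auto intro: filt_past simp: before_def)

lemma wbar_sq_integrable: "k \<le> E \<Longrightarrow> sq_integrable M (wbar t k)"
  unfolding avg_iter_def by (rule sq_integrable_sum) (auto intro: sq_integrable_scaleR w_sq_integrable)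

lemma wbar_measurable_Filt [measurable]: "k' \<le> k \<Longrightarrow> k < E \<Longrightarrow> wbar t k' \<in> borel_measurable (Filt t k)"
  unfolding avg_iter_def using w_measurable_Filt by measurable

lemma gradF_w_sq_integrable: "k \<le> E \<Longrightarrow> i < C \<Longrightarrow> sq_integrable M (\<lambda>\<omega>. gradF i (w i t k \<omega>))"
  by (rule sq_integrable_compose[OF gradF_measurable smooth w_sq_integrable])

lemma global_grad_wbar_sq_integrable: "k \<le> E \<Longrightarrow> sq_integrable M (\<lambda>\<omega>. global_grad (wbar t k \<omega>))"
  by (rule sq_integrable_compose[OF global_grad_measurable global_grad_lipschitz wbar_sq_integrable])

lemma avg_sgrad_sq_integrable: "k < E \<Longrightarrow> sq_integrable M (avg_sgrad t k)"
  unfolding avg_sgrad_def by (rule sq_integrable_sum) (auto intro: sq_integrable_scaleR g_sq_integrable)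

lemma g_second_moment: "i < C \<Longrightarrow> k < E \<Longrightarrow> (\<integral>\<omega>. (norm (g i t k \<omega>))\<^sup>2 \<partial>M) \<le> G\<^sup>2"
  by (rule integral_le_of_nn_integral_le[OF sq_integrableD(2)[OF g_sq_integrable] _ second_moment])
    auto

lemma g_variance:
  "i < C \<Longrightarrow> k < E \<Longrightarrow> (\<integral>\<omega>. (norm (g i t k \<omega> - gradF i (w i t k \<omega>)))\<^sup>2 \<partial>M) \<le> \<sigma>\<^sup>2"
  by (rule integral_le_of_nn_integral_le[OF sq_integrableD(2)[OF sq_integrable_diff] _ variance])
    (auto intro: g_sq_integrable gradF_w_sq_integrable)

lemma wbar_0_0: "\<omega> \<in> space M \<Longrightarrow> wbar 0 0 \<omega> = w0"
  by (simp add: avg_iter_def init sum_weights_scaleR)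

lemma wbar_Suc_0: "\<omega> \<in> space M \<Longrightarrow> wbar (Suc t) 0 \<omega> = wbar t E \<omega>"
  by (subst (1) avg_iter_def) (simp add: restart sum_weights_scaleR)

lemma w_round_start: "\<omega> \<in> space M \<Longrightarrow> i < C \<Longrightarrow> w i t 0 \<omega> = wbar t 0 \<omega>"
  by (cases t) (simp_all add: init wbar_0_0 restart wbar_Suc_0)

lemma wbar_step:
  assumes "k < E" "\<omega> \<in> space M"
  shows "wbar t (Suc k) \<omega> = wbar t k \<omega> - (\<alpha> * \<gamma>) *\<^sub>R (wbar t k \<omega> - wbar t 0 \<omega>) - \<gamma> *\<^sub>R avg_sgrad t k \<omega>"
proof -
  have "wbar t (Suc k) \<omega>
      = (\<Sum>i<C. p i *\<^sub>R ((1 - \<alpha> * \<gamma>) *\<^sub>R w i t k \<omega> + (\<alpha> * \<gamma>) *\<^sub>R wbar t 0 \<omega> - \<gamma> *\<^sub>R g i t k \<omega>))"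
    using assms by (simp add: avg_iter_def[of C p w t "Suc k"] update)
  also have "\<dots> = (1 - \<alpha> * \<gamma>) *\<^sub>R wbar t k \<omega> + (\<alpha> * \<gamma>) *\<^sub>R (\<Sum>i<C. p i *\<^sub>R wbar t 0 \<omega>)
      - \<gamma> *\<^sub>R avg_sgrad t k \<omega>"
    by (simp add: avg_iter_def[of C p w t k] avg_sgrad_def scaleR_add_right scaleR_diff_right
        sum.distrib sum_subtractf scaleR_sum_right mult.commute)
  also have "\<dots> = wbar t k \<omega> - (\<alpha> * \<gamma>) *\<^sub>R (wbar t k \<omega> - wbar t 0 \<omega>) - \<gamma> *\<^sub>R avg_sgrad t k \<omega>"
    by (simp add: sum_weights_scaleR algebra_simps)
  finally show ?thesis .
qed

lemma norm_w_drift_le: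
  assumes "\<omega> \<in> space M" "i < C"
  shows "k \<le> E \<Longrightarrow> norm (w i t k \<omega> - wbar t 0 \<omega>) \<le> \<gamma> * (\<Sum>j<k. norm (g i t j \<omega>))"
proof (induction k)
  case 0
  then show ?case
    using w_round_start[OF assms] by simp
next
  case (Suc k)
  have "w i t (Suc k) \<omega> - wbar t 0 \<omega> = (1 - \<alpha> * \<gamma>) *\<^sub>R (w i t k \<omega> - wbar t 0 \<omega>) - \<gamma> *\<^sub>R g i t k \<omega>"
    using update[OF assms(2) _ assms(1)] Suc.prems by (simp add: algebra_simps)
  then have "norm (w i t (Suc k) \<omega> - wbar t 0 \<omega>)
      \<le> \<bar>1 - \<alpha> * \<gamma>\<bar> * norm (w i t k \<omega> - wbar t 0 \<omega>) + \<gamma> * norm (g i t k \<omega>)"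
    using norm_triangle_ineq4 step_size_pos by (metis abs_of_pos norm_scaleR)
  also have "\<dots> \<le> norm (w i t k \<omega> - wbar t 0 \<omega>) + \<gamma> * norm (g i t k \<omega>)"
    using alpha_step_le step_size_pos alpha_pos by (intro add_mono mult_left_le_one_le) auto
  also have "\<dots> \<le> \<gamma> * (\<Sum>j<Suc k. norm (g i t j \<omega>))"
    using Suc by (simp add: distrib_left)
  finally show ?case .
qed

subsection \<open>Gradient noise\<close>

definition avg_grad :: "nat \<Rightarrow> nat \<Rightarrow> 'm \<Rightarrow> 'a" where
  "avg_grad t k \<omega> = (\<Sum>i<C. p i *\<^sub>R gradF i (w i t k \<omega>))"

definition sgrad_noise :: "nat \<Rightarrow> nat \<Rightarrow> nat \<Rightarrow> 'm \<Rightarrow> 'a" where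
  "sgrad_noise i t k \<omega> = g i t k \<omega> - gradF i (w i t k \<omega>)"

lemma gradF_w_measurable_Filt [measurable]:
  "k < E \<Longrightarrow> i < C \<Longrightarrow> (\<lambda>\<omega>. gradF i (w i t k \<omega>)) \<in> borel_measurable (Filt t k)"
  using w_measurable_Filt[of k k] by measurable

lemma avg_grad_measurable_Filt [measurable]: "k < E \<Longrightarrow> avg_grad t k \<in> borel_measurable (Filt t k)"
  unfolding avg_grad_def by measurable

lemma avg_grad_sq_integrable: "k \<le> E \<Longrightarrow> sq_integrable M (avg_grad t k)"
  unfolding avg_grad_def
  by (rule sq_integrable_sum) (auto intro: sq_integrable_scaleR gradF_w_sq_integrable)

lemma sgrad_noise_sq_integrable: "k < E \<Longrightarrow> i < C \<Longrightarrow> sq_integrable M (sgrad_noise i t k)"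
  unfolding sgrad_noise_def by (intro sq_integrable_diff g_sq_integrable gradF_w_sq_integrable) auto

lemma avg_sgrad_minus_avg_grad: "avg_sgrad t k \<omega> - avg_grad t k \<omega> = (\<Sum>i<C. p i *\<^sub>R sgrad_noise i t k \<omega>)"
  unfolding avg_sgrad_def avg_grad_def sgrad_noise_def by (simp add: sum_subtractf scaleR_diff_right)

lemma integral_inner_g:
  assumes "k < E" "i < C" "X \<in> borel_measurable (Filt t k)" "sq_integrable M X"
  shows "(\<integral>\<omega>. X \<omega> \<bullet> g i t k \<omega> \<partial>M) = (\<integral>\<omega>. X \<omega> \<bullet> gradF i (w i t k \<omega>) \<partial>M)"
  using assms unbiased
  by (intro finite_measure_subalgebra.integral_inner_cond_exp[OF finite_measure_subalgebra_Filt]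
      g_sq_integrable gradF_w_sq_integrable) auto

lemma integral_inner_sgrad_noise:
  assumes "k < E" "i < C" "X \<in> borel_measurable (Filt t k)" "sq_integrable M X"
  shows "(\<integral>\<omega>. X \<omega> \<bullet> sgrad_noise i t k \<omega> \<partial>M) = 0"
proof -
  have "(\<integral>\<omega>. X \<omega> \<bullet> sgrad_noise i t k \<omega> \<partial>M)
      = (\<integral>\<omega>. X \<omega> \<bullet> g i t k \<omega> \<partial>M) - (\<integral>\<omega>. X \<omega> \<bullet> gradF i (w i t k \<omega>) \<partial>M)"
    unfolding sgrad_noise_def inner_diff_right using assms
    by (intro Bochner_Integration.integral_diff integrable_inner_sq_integrable
        g_sq_integrable gradF_w_sq_integrable) auto
  then show ?thesis
    using integral_inner_g[OF assms] by simp
qed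

lemma integral_inner_avg_noise:
  assumes "k < E" "X \<in> borel_measurable (Filt t k)" "sq_integrable M X"
  shows "(\<integral>\<omega>. X \<omega> \<bullet> (avg_sgrad t k \<omega> - avg_grad t k \<omega>) \<partial>M) = 0"
proof -
  have "(\<integral>\<omega>. X \<omega> \<bullet> (avg_sgrad t k \<omega> - avg_grad t k \<omega>) \<partial>M)
      = (\<Sum>i<C. p i * (\<integral>\<omega>. X \<omega> \<bullet> sgrad_noise i t k \<omega> \<partial>M))"
    unfolding avg_sgrad_minus_avg_grad inner_sum_right inner_scaleR_right using assms
    by (subst Bochner_Integration.integral_sum)
      (auto intro: integrable_inner_sq_integrable sgrad_noise_sq_integrable)
  then show ?thesis
    using integral_inner_sgrad_noise[OF assms(1) _ assms(2,3)] by simp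
qed

lemma cond_indep_clients:
  assumes k: "k < E" and ij: "i < C" "j < C" "i \<noteq> j"
  shows "cond_indep_real M (Filt t k) (\<lambda>\<omega>. g i t k \<omega> \<bullet> b) (\<lambda>\<omega>. g j t k \<omega> \<bullet> b)"
  unfolding cond_indep_real_def
proof (intro allI impI)
  fix f1 f2 :: "real \<Rightarrow> real"
  assume [measurable]: "f1 \<in> borel_measurable borel" "f2 \<in> borel_measurable borel"
    and bounded: "\<exists>B. \<forall>x. \<bar>f1 x\<bar> \<le> B" "\<exists>B. \<forall>x. \<bar>f2 x\<bar> \<le> B"
  \<comment> \<open>all other clients enter the product hypothesis through the constant \<open>1\<close>\<close>
  define f where "f l = (if l = i then (\<lambda>x. f1 (x \<bullet> b)) else if l = j then (\<lambda>x. f2 (x \<bullet> b))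
    else (\<lambda>_. 1))" for l
  have "f l \<in> borel_measurable borel \<and> (\<exists>B. \<forall>x. \<bar>f l x\<bar> \<le> B)" for l
    using bounded unfolding f_def by (auto intro: exI[of _ 1])
  then have product: "AE \<omega> in M. real_cond_exp M (Filt t k) (\<lambda>\<omega>. \<Prod>l<C. f l (g l t k \<omega>)) \<omega>
      = (\<Prod>l<C. real_cond_exp M (Filt t k) (\<lambda>\<omega>. f l (g l t k \<omega>)) \<omega>)"
    using cond_indep[OF k] by blast
  interpret finite_measure_subalgebra M "Filt t k"
    by (rule finite_measure_subalgebra_Filt)
  have one: "AE \<omega> in M. real_cond_exp M (Filt t k) (\<lambda>\<omega>. 1) \<omega> = 1"
    by (rule real_cond_exp_F_meas) auto
  have two_factors: "(\<Prod>l<C. q l) = q i * q j" if "\<And>l. l \<noteq> i \<Longrightarrow> l \<noteq> j \<Longrightarrow> q l = 1" for q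
    using ij that by (intro prod_eq_two_factors) auto
  show "AE \<omega> in M. real_cond_exp M (Filt t k) (\<lambda>\<omega>. f1 (g i t k \<omega> \<bullet> b) * f2 (g j t k \<omega> \<bullet> b)) \<omega>
      = real_cond_exp M (Filt t k) (\<lambda>\<omega>. f1 (g i t k \<omega> \<bullet> b)) \<omega>
        * real_cond_exp M (Filt t k) (\<lambda>\<omega>. f2 (g j t k \<omega> \<bullet> b)) \<omega>"
    using product one by eventually_elim (simp add: two_factors f_def ij(3) not_sym[OF ij(3)])
qed

lemma integral_inner_g_g:
  assumes k: "k < E" and ij: "i < C" "j < C" "i \<noteq> j"
  shows "(\<integral>\<omega>. g i t k \<omega> \<bullet> g j t k \<omega> \<partial>M)
    = (\<integral>\<omega>. gradF i (w i t k \<omega>) \<bullet> gradF j (w j t k \<omega>) \<partial>M)"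
proof -
  interpret finite_measure_subalgebra M "Filt t k"
    by (rule finite_measure_subalgebra_Filt)
  have [measurable]: "(\<lambda>\<omega>. gradF l (w l t k \<omega>)) \<in> borel_measurable (Filt t k)" if "l < C" for l
    using k that by (rule gradF_w_measurable_Filt)
  have "(\<integral>\<omega>. (g i t k \<omega> \<bullet> b) * (g j t k \<omega> \<bullet> b) \<partial>M)
      = (\<integral>\<omega>. (gradF i (w i t k \<omega>) \<bullet> b) * (gradF j (w j t k \<omega>) \<bullet> b) \<partial>M)" if "b \<in> Basis" for b
    using k ij that unbiased
    by (intro integral_mult_cond_indep cond_indep_clients sq_integrable_inner_left
        g_sq_integrable gradF_w_sq_integrable) auto
  then show ?thesis
    using k ij by (simp add: integral_inner_eq_sum_Basis g_sq_integrable gradF_w_sq_integrable)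
qed

lemma integral_inner_sgrad_noise_noise:
  assumes k: "k < E" and ij: "i < C" "j < C" "i \<noteq> j"
  shows "(\<integral>\<omega>. sgrad_noise i t k \<omega> \<bullet> sgrad_noise j t k \<omega> \<partial>M) = 0"
proof -
  have gi: "sq_integrable M (g i t k)" and gj: "sq_integrable M (g j t k)"
    and hi: "sq_integrable M (\<lambda>\<omega>. gradF i (w i t k \<omega>))"
    and hj: "sq_integrable M (\<lambda>\<omega>. gradF j (w j t k \<omega>))"
    using k ij by (auto intro: g_sq_integrable gradF_w_sq_integrable)
  have "(\<integral>\<omega>. sgrad_noise i t k \<omega> \<bullet> sgrad_noise j t k \<omega> \<partial>M)
      = (\<integral>\<omega>. g i t k \<omega> \<bullet> sgrad_noise j t k \<omega> \<partial>M)
        - (\<integral>\<omega>. gradF i (w i t k \<omega>) \<bullet> sgrad_noise j t k \<omega> \<partial>M)"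
    unfolding sgrad_noise_def[of i] inner_diff_left using k ij
    by (intro Bochner_Integration.integral_diff integrable_inner_sq_integrable gi hi
        sgrad_noise_sq_integrable)
  also have "(\<integral>\<omega>. gradF i (w i t k \<omega>) \<bullet> sgrad_noise j t k \<omega> \<partial>M) = 0"
    using k ij hi by (intro integral_inner_sgrad_noise) auto
  also have "(\<integral>\<omega>. g i t k \<omega> \<bullet> sgrad_noise j t k \<omega> \<partial>M)
      = (\<integral>\<omega>. g i t k \<omega> \<bullet> g j t k \<omega> \<partial>M) - (\<integral>\<omega>. gradF j (w j t k \<omega>) \<bullet> g i t k \<omega> \<partial>M)"
    unfolding sgrad_noise_def inner_diff_right
    using integrable_inner_sq_integrable[OF gi gj] integrable_inner_sq_integrable[OF gi hj]
    by (simp add: inner_commute)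
  also have "(\<integral>\<omega>. gradF j (w j t k \<omega>) \<bullet> g i t k \<omega> \<partial>M)
      = (\<integral>\<omega>. gradF j (w j t k \<omega>) \<bullet> gradF i (w i t k \<omega>) \<partial>M)"
    using k ij hj by (intro integral_inner_g) auto
  finally show ?thesis
    using integral_inner_g_g[OF assms] by (simp add: inner_commute)
qed

lemma avg_noise_variance:
  assumes "k < E"
  shows "(\<integral>\<omega>. (norm (avg_sgrad t k \<omega> - avg_grad t k \<omega>))\<^sup>2 \<partial>M) \<le> (\<Sum>i<C. (p i)\<^sup>2) * \<sigma>\<^sup>2"
proof -
  have "(\<integral>\<omega>. (norm (avg_sgrad t k \<omega> - avg_grad t k \<omega>))\<^sup>2 \<partial>M)
      = (\<Sum>i<C. (p i)\<^sup>2 * (\<integral>\<omega>. (norm (sgrad_noise i t k \<omega>))\<^sup>2 \<partial>M))"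
    unfolding avg_sgrad_minus_avg_grad using assms
    by (intro integral_sq_norm_sum_orthogonal sgrad_noise_sq_integrable
        integral_inner_sgrad_noise_noise) auto
  also have "\<dots> \<le> (\<Sum>i<C. (p i)\<^sup>2 * \<sigma>\<^sup>2)"
    using g_variance assms by (intro sum_mono mult_left_mono) (auto simp: sgrad_noise_def)
  finally show ?thesis
    by (simp add: sum_distrib_right)
qed

subsection \<open>Client drift\<close>

definition drift :: "nat \<Rightarrow> nat \<Rightarrow> 'm \<Rightarrow> real" where
  "drift t k \<omega> = (\<Sum>i<C. p i * norm (w i t k \<omega> - wbar t 0 \<omega>))"

lemma drift_nonneg: "drift t k \<omega> \<ge> 0"
  unfolding drift_def using weights_nonneg by (intro sum_nonneg) auto

lemma norm_wbar_diff_le_drift: "norm (wbar t k \<omega> - wbar t 0 \<omega>) \<le> drift t k \<omega>"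
proof -
  have "wbar t k \<omega> - wbar t 0 \<omega> = (\<Sum>i<C. p i *\<^sub>R (w i t k \<omega> - wbar t 0 \<omega>))"
    by (simp add: avg_iter_def[of C p w t k] scaleR_diff_right sum_subtractf sum_weights_scaleR)
  then have "norm (wbar t k \<omega> - wbar t 0 \<omega>) \<le> (\<Sum>i<C. norm (p i *\<^sub>R (w i t k \<omega> - wbar t 0 \<omega>)))"
    by (metis norm_sum)
  also have "\<dots> = drift t k \<omega>"
    unfolding drift_def using weights_nonneg by (intro sum.cong) auto
  finally show ?thesis .
qed

lemma norm_global_grad_minus_avg_grad_le:
  "norm (global_grad (wbar t k \<omega>) - avg_grad t k \<omega>) \<le> 2 * L * drift t k \<omega>"
proof -
  have "norm (gradF i (wbar t k \<omega>) - gradF i (w i t k \<omega>))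
      \<le> L * (norm (wbar t k \<omega> - wbar t 0 \<omega>) + norm (w i t k \<omega> - wbar t 0 \<omega>))" if "i < C" for i
  proof -
    have "norm (wbar t k \<omega> - w i t k \<omega>) \<le> norm (wbar t k \<omega> - wbar t 0 \<omega>) + norm (w i t k \<omega> - wbar t 0 \<omega>)"
      using norm_triangle_ineq4[of "wbar t k \<omega> - wbar t 0 \<omega>" "w i t k \<omega> - wbar t 0 \<omega>"] by simp
    then show ?thesis
      using smooth[OF that, of "wbar t k \<omega>" "w i t k \<omega>"] L_nonneg by (smt (verit) mult_left_mono)
  qed
  then have "norm (global_grad (wbar t k \<omega>) - avg_grad t k \<omega>)
      \<le> (\<Sum>i<C. p i * (L * (norm (wbar t k \<omega> - wbar t 0 \<omega>) + norm (w i t k \<omega> - wbar t 0 \<omega>))))"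
    unfolding global_grad_def avg_grad_def sum_subtractf[symmetric] scaleR_diff_right[symmetric]
    using weights_nonneg by (intro order_trans[OF norm_sum] sum_mono) (auto intro: mult_left_mono)
  also have "\<dots> = L * norm (wbar t k \<omega> - wbar t 0 \<omega>) + L * drift t k \<omega>"
    unfolding drift_def
    by (simp add: distrib_left sum.distrib sum_distrib_left[symmetric] sum_distrib_right[symmetric]
        weights_sum mult_ac)
  also have "\<dots> \<le> 2 * L * drift t k \<omega>"
    using mult_left_mono[OF norm_wbar_diff_le_drift L_nonneg] by simp
  finally show ?thesis .
qed

lemma drift_sq_le:
  assumes "\<omega> \<in> space M" "k \<le> E"
  shows "(drift t k \<omega>)\<^sup>2 \<le> \<gamma>\<^sup>2 * real k * (\<Sum>j<k. \<Sum>i<C. p i * (norm (g i t j \<omega>))\<^sup>2)"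
proof -
  define s where "s j = (\<Sum>i<C. p i * norm (g i t j \<omega>))" for j
  have "drift t k \<omega> \<le> (\<Sum>i<C. p i * (\<gamma> * (\<Sum>j<k. norm (g i t j \<omega>))))"
    unfolding drift_def using norm_w_drift_le[OF assms(1) _ assms(2)] weights_nonneg
    by (intro sum_mono mult_left_mono) auto
  also have "\<dots> = \<gamma> * (\<Sum>j<k. s j)"
    unfolding s_def by (simp add: sum_distrib_left sum.swap[of _ "{..<C}"] mult_ac)
  finally have "(drift t k \<omega>)\<^sup>2 \<le> \<gamma>\<^sup>2 * (\<Sum>j<k. s j)\<^sup>2"
    using drift_nonneg by (metis power_mono power_mult_distrib)
  also have "\<dots> \<le> \<gamma>\<^sup>2 * (real k * (\<Sum>j<k. (s j)\<^sup>2))"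
    using sum_squared_le_sum_of_squares[of s "{..<k}"] by (intro mult_left_mono) (auto simp: mult.commute)
  also have "\<dots> \<le> \<gamma>\<^sup>2 * (real k * (\<Sum>j<k. \<Sum>i<C. p i * (norm (g i t j \<omega>))\<^sup>2))"
    unfolding s_def using weights_nonneg weights_sum
    by (intro mult_left_mono sum_mono square_weighted_sum_le) auto
  finally show ?thesis
    by (simp add: mult_ac)
qed

lemma drift_sq_integrable:
  assumes "k \<le> E"
  shows "sq_integrable M (drift t k)"
proof -
  have "sq_integrable M (\<lambda>\<omega>. p i *\<^sub>R norm (w i t k \<omega> - wbar t 0 \<omega>))" if "i < C" for i
    using assms that
    by (intro sq_integrable_scaleR sq_integrable_norm sq_integrable_diff w_sq_integrable
        wbar_sq_integrable) auto
  then show ?thesis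
    unfolding drift_def by (subst sq_integrable_sum) auto
qed

lemma integral_drift_sq_le:
  assumes "k \<le> E"
  shows "(\<integral>\<omega>. (drift t k \<omega>)\<^sup>2 \<partial>M) \<le> \<gamma>\<^sup>2 * (real k)\<^sup>2 * G\<^sup>2"
proof -
  have int: "integrable M (\<lambda>\<omega>. p i * (norm (g i t j \<omega>))\<^sup>2)" if "i < C" "j < k" for i j
    using sq_integrableD(2)[OF g_sq_integrable[of i j t]] that assms by simp
  have "(\<integral>\<omega>. (drift t k \<omega>)\<^sup>2 \<partial>M)
      \<le> (\<integral>\<omega>. \<gamma>\<^sup>2 * real k * (\<Sum>j<k. \<Sum>i<C. p i * (norm (g i t j \<omega>))\<^sup>2) \<partial>M)"
    using sq_integrableD(2)[OF drift_sq_integrable[OF assms]] drift_sq_le[OF _ assms] int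
    by (intro integral_mono) (auto intro!: Bochner_Integration.integrable_sum)
  also have "\<dots> = \<gamma>\<^sup>2 * real k * (\<Sum>j<k. \<Sum>i<C. p i * (\<integral>\<omega>. (norm (g i t j \<omega>))\<^sup>2 \<partial>M))"
  proof -
    have "(\<integral>\<omega>. (\<Sum>i<C. p i * (norm (g i t j \<omega>))\<^sup>2) \<partial>M)
        = (\<Sum>i<C. p i * (\<integral>\<omega>. (norm (g i t j \<omega>))\<^sup>2 \<partial>M))" if "j < k" for j
      using int that by (subst Bochner_Integration.integral_sum) auto
    then show ?thesis
      unfolding integral_mult_right_zero using int
      by (subst Bochner_Integration.integral_sum) (auto intro!: Bochner_Integration.integrable_sum)
  qed
  also have "\<dots> \<le> \<gamma>\<^sup>2 * real k * (\<Sum>j<k. \<Sum>i<C. p i * G\<^sup>2)"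
    using g_second_moment assms weights_nonneg
    by (intro mult_left_mono sum_mono) auto
  also have "\<dots> = \<gamma>\<^sup>2 * (real k)\<^sup>2 * G\<^sup>2"
    by (simp add: sum_distrib_right[symmetric] weights_sum power2_eq_square)
  finally show ?thesis .
qed

subsection \<open>Descent\<close>

text \<open>\<open>mean_step t k\<close> is \<open>wbar t k - wbar t (Suc k)\<close> with the stochastic gradients replaced by the
  true local gradients; \<open>quad_model_incr t k\<close> bounds the increase of \<open>global_obj\<close> over the
  step by \<open>global_obj_upper_bound\<close>.\<close>

definition mean_step :: "nat \<Rightarrow> nat \<Rightarrow> 'm \<Rightarrow> 'a" where
  "mean_step t k \<omega> = (\<alpha> * \<gamma>) *\<^sub>R (wbar t k \<omega> - wbar t 0 \<omega>) + \<gamma> *\<^sub>R avg_grad t k \<omega>"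

definition quad_model_incr :: "nat \<Rightarrow> nat \<Rightarrow> 'm \<Rightarrow> real" where
  "quad_model_incr t k \<omega> = global_grad (wbar t k \<omega>) \<bullet> (wbar t (Suc k) \<omega> - wbar t k \<omega>)
     + L / 2 * (norm (wbar t (Suc k) \<omega> - wbar t k \<omega>))\<^sup>2"

lemma mean_step_sq_integrable: "k < E \<Longrightarrow> sq_integrable M (mean_step t k)"
  unfolding mean_step_def
  by (intro sq_integrable_add sq_integrable_scaleR sq_integrable_diff wbar_sq_integrable
      avg_grad_sq_integrable) auto

lemma mean_step_measurable_Filt: "k < E \<Longrightarrow> mean_step t k \<in> borel_measurable (Filt t k)"
  unfolding mean_step_def by measurable

lemma global_grad_wbar_measurable_Filt:
  "k < E \<Longrightarrow> (\<lambda>\<omega>. global_grad (wbar t k \<omega>)) \<in> borel_measurable (Filt t k)"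
  by measurable

lemma wbar_increment:
  "k < E \<Longrightarrow> \<omega> \<in> space M \<Longrightarrow>
    wbar t (Suc k) \<omega> - wbar t k \<omega> = - mean_step t k \<omega> - \<gamma> *\<^sub>R (avg_sgrad t k \<omega> - avg_grad t k \<omega>)"
  by (simp add: wbar_step mean_step_def algebra_simps)

lemma integral_quad_model_incr_eq:
  assumes k: "k < E"
  shows "(\<integral>\<omega>. quad_model_incr t k \<omega> \<partial>M)
    = (\<integral>\<omega>. - (global_grad (wbar t k \<omega>) \<bullet> mean_step t k \<omega>) + L / 2 * (norm (mean_step t k \<omega>))\<^sup>2 \<partial>M)
      + L * \<gamma>\<^sup>2 / 2 * (\<integral>\<omega>. (norm (avg_sgrad t k \<omega> - avg_grad t k \<omega>))\<^sup>2 \<partial>M)"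
proof -
  define v where "v = (\<lambda>\<omega>. global_grad (wbar t k \<omega>))"
  define S where "S = mean_step t k"
  define \<xi> where "\<xi> = (\<lambda>\<omega>. avg_sgrad t k \<omega> - avg_grad t k \<omega>)"
  define Q where "Q = (\<lambda>\<omega>. - (v \<omega> \<bullet> S \<omega>) + L / 2 * (norm (S \<omega>))\<^sup>2)"
  have v: "sq_integrable M v" and S: "sq_integrable M S" and \<xi>: "sq_integrable M \<xi>"
    unfolding v_def S_def \<xi>_def using k
    by (auto intro!: global_grad_wbar_sq_integrable mean_step_sq_integrable sq_integrable_diff
        avg_sgrad_sq_integrable avg_grad_sq_integrable)
  have Q: "integrable M Q"
    unfolding Q_def by (intro Bochner_Integration.integrable_add integrable_minus integrable_mult_right
      integrable_inner_sq_integrable sq_integrableD(2) v S)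
  have "(\<integral>\<omega>. quad_model_incr t k \<omega> \<partial>M) = (\<integral>\<omega>. Q \<omega> - \<gamma> * (v \<omega> \<bullet> \<xi> \<omega>) + L * \<gamma> * (S \<omega> \<bullet> \<xi> \<omega>)
      + L * \<gamma>\<^sup>2 / 2 * (norm (\<xi> \<omega>))\<^sup>2 \<partial>M)"
    unfolding quad_model_incr_def Q_def v_def S_def \<xi>_def
    by (intro Bochner_Integration.integral_cong refl) (simp only: wbar_increment[OF k] quadratic_model_expand)
  also have "\<dots> = (\<integral>\<omega>. Q \<omega> \<partial>M) - \<gamma> * (\<integral>\<omega>. v \<omega> \<bullet> \<xi> \<omega> \<partial>M) + L * \<gamma> * (\<integral>\<omega>. S \<omega> \<bullet> \<xi> \<omega> \<partial>M)
      + L * \<gamma>\<^sup>2 / 2 * (\<integral>\<omega>. (norm (\<xi> \<omega>))\<^sup>2 \<partial>M)"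
    using Q integrable_inner_sq_integrable[OF v \<xi>] integrable_inner_sq_integrable[OF S \<xi>]
      sq_integrableD(2)[OF \<xi>]
    by simp
  also have "(\<integral>\<omega>. v \<omega> \<bullet> \<xi> \<omega> \<partial>M) = 0"
    unfolding \<xi>_def
    by (rule integral_inner_avg_noise[OF k _ v]) (simp add: v_def global_grad_wbar_measurable_Filt[OF k])
  also have "(\<integral>\<omega>. S \<omega> \<bullet> \<xi> \<omega> \<partial>M) = 0"
    unfolding \<xi>_def S_def using S unfolding S_def
    by (rule integral_inner_avg_noise[OF k mean_step_measurable_Filt[OF k]])
  finally show ?thesis
    by (simp add: Q_def v_def S_def \<xi>_def)
qed

lemma mean_step_quadratic_le:
  "- (global_grad (wbar t k \<omega>) \<bullet> mean_step t k \<omega>) + L / 2 * (norm (mean_step t k \<omega>))\<^sup>2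
    \<le> - \<gamma> / 4 * (norm (global_grad (wbar t k \<omega>)))\<^sup>2
      + (\<alpha>\<^sup>2 * \<gamma> + L * \<alpha>\<^sup>2 * \<gamma>\<^sup>2 + 2 * \<gamma> * L\<^sup>2) * (drift t k \<omega>)\<^sup>2"
proof -
  have "- (global_grad (wbar t k \<omega>) \<bullet> mean_step t k \<omega>) + L / 2 * (norm (mean_step t k \<omega>))\<^sup>2
      \<le> - \<gamma> / 4 * (norm (global_grad (wbar t k \<omega>)))\<^sup>2
        + (\<alpha>\<^sup>2 * \<gamma> + L * \<alpha>\<^sup>2 * \<gamma>\<^sup>2) * (norm (wbar t k \<omega> - wbar t 0 \<omega>))\<^sup>2
        + \<gamma> / 2 * (norm (global_grad (wbar t k \<omega>) - avg_grad t k \<omega>))\<^sup>2"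
    unfolding mean_step_def
    by (rule prox_step_bound[OF less_imp_le[OF step_size_pos] L_nonneg L_step_le])
  also have "(\<alpha>\<^sup>2 * \<gamma> + L * \<alpha>\<^sup>2 * \<gamma>\<^sup>2) * (norm (wbar t k \<omega> - wbar t 0 \<omega>))\<^sup>2
      \<le> (\<alpha>\<^sup>2 * \<gamma> + L * \<alpha>\<^sup>2 * \<gamma>\<^sup>2) * (drift t k \<omega>)\<^sup>2"
    using norm_wbar_diff_le_drift step_size_pos L_nonneg by (intro mult_left_mono power_mono) auto
  also have "\<gamma> / 2 * (norm (global_grad (wbar t k \<omega>) - avg_grad t k \<omega>))\<^sup>2
      \<le> \<gamma> / 2 * (2 * L * drift t k \<omega>)\<^sup>2"
    using norm_global_grad_minus_avg_grad_le step_size_pos by (intro mult_left_mono power_mono) auto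
  finally show ?thesis
    by (simp add: power_mult_distrib algebra_simps)
qed

lemma integral_quad_model_incr_le:
  assumes k: "k < E"
  shows "(\<integral>\<omega>. quad_model_incr t k \<omega> \<partial>M) \<le> - \<gamma> / 4 * (\<integral>\<omega>. (norm (global_grad (wbar t k \<omega>)))\<^sup>2 \<partial>M)
     + (\<alpha>\<^sup>2 * \<gamma> + L * \<alpha>\<^sup>2 * \<gamma>\<^sup>2 + 2 * \<gamma> * L\<^sup>2) * (\<gamma>\<^sup>2 * (real k)\<^sup>2 * G\<^sup>2)
     + L * \<gamma>\<^sup>2 / 2 * ((\<Sum>i<C. (p i)\<^sup>2) * \<sigma>\<^sup>2)"
proof -
  define c where "c = \<alpha>\<^sup>2 * \<gamma> + L * \<alpha>\<^sup>2 * \<gamma>\<^sup>2 + 2 * \<gamma> * L\<^sup>2"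
  have c: "c \<ge> 0"
    unfolding c_def using step_size_pos L_nonneg by simp
  have sq_v: "sq_integrable M (\<lambda>\<omega>. global_grad (wbar t k \<omega>))"
    and sq_S: "sq_integrable M (mean_step t k)" and sq_d: "sq_integrable M (drift t k)"
    using k by (auto intro: global_grad_wbar_sq_integrable mean_step_sq_integrable drift_sq_integrable)
  have v: "integrable M (\<lambda>\<omega>. (norm (global_grad (wbar t k \<omega>)))\<^sup>2)"
    and d: "integrable M (\<lambda>\<omega>. (drift t k \<omega>)\<^sup>2)"
    using sq_integrableD(2)[OF sq_v] sq_integrableD(2)[OF sq_d] by simp_all
  have S: "integrable M (\<lambda>\<omega>. - (global_grad (wbar t k \<omega>) \<bullet> mean_step t k \<omega>) + L / 2 * (norm (mean_step t k \<omega>))\<^sup>2)"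
    by (intro Bochner_Integration.integrable_add integrable_minus integrable_mult_right
        integrable_inner_sq_integrable sq_integrableD(2) sq_v sq_S)
  have "(\<integral>\<omega>. - (global_grad (wbar t k \<omega>) \<bullet> mean_step t k \<omega>) + L / 2 * (norm (mean_step t k \<omega>))\<^sup>2 \<partial>M)
      \<le> (\<integral>\<omega>. - \<gamma> / 4 * (norm (global_grad (wbar t k \<omega>)))\<^sup>2 + c * (drift t k \<omega>)\<^sup>2 \<partial>M)"
    using S v d unfolding c_def by (intro integral_mono mean_step_quadratic_le) auto
  also have "\<dots> = - \<gamma> / 4 * (\<integral>\<omega>. (norm (global_grad (wbar t k \<omega>)))\<^sup>2 \<partial>M) + c * (\<integral>\<omega>. (drift t k \<omega>)\<^sup>2 \<partial>M)"
    using v d by simp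
  also have "\<dots> \<le> - \<gamma> / 4 * (\<integral>\<omega>. (norm (global_grad (wbar t k \<omega>)))\<^sup>2 \<partial>M) + c * (\<gamma>\<^sup>2 * (real k)\<^sup>2 * G\<^sup>2)"
    using integral_drift_sq_le[of k t] k c by (intro add_left_mono mult_left_mono) auto
  finally have quadratic: "(\<integral>\<omega>. - (global_grad (wbar t k \<omega>) \<bullet> mean_step t k \<omega>) + L / 2 * (norm (mean_step t k \<omega>))\<^sup>2 \<partial>M)
      \<le> - \<gamma> / 4 * (\<integral>\<omega>. (norm (global_grad (wbar t k \<omega>)))\<^sup>2 \<partial>M) + c * (\<gamma>\<^sup>2 * (real k)\<^sup>2 * G\<^sup>2)" .
  have noise: "L * \<gamma>\<^sup>2 / 2 * (\<integral>\<omega>. (norm (avg_sgrad t k \<omega> - avg_grad t k \<omega>))\<^sup>2 \<partial>M)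
      \<le> L * \<gamma>\<^sup>2 / 2 * ((\<Sum>i<C. (p i)\<^sup>2) * \<sigma>\<^sup>2)"
    using avg_noise_variance[OF k] L_nonneg by (intro mult_left_mono) auto
  show ?thesis
    using quadratic noise unfolding integral_quad_model_incr_eq[OF k] c_def by linarith
qed

lemma quad_model_incr_integrable: "k < E \<Longrightarrow> integrable M (quad_model_incr t k)"
proof -
  assume k: "k < E"
  have incr: "sq_integrable M (\<lambda>\<omega>. wbar t (Suc k) \<omega> - wbar t k \<omega>)"
    using k by (intro sq_integrable_diff wbar_sq_integrable) auto
  show ?thesis
    unfolding quad_model_incr_def using k
    by (intro Bochner_Integration.integrable_add integrable_mult_right integrable_inner_sq_integrable
        global_grad_wbar_sq_integrable incr sq_integrableD(2)[OF incr]) auto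
qed

lemma global_obj_gap_le_sum_quad_model_incr:
  assumes "\<omega> \<in> space M"
  shows "f_inf - global_obj w0 \<le> (\<Sum>t<T. \<Sum>k<E. quad_model_incr t k \<omega>)"
proof -
  have round: "global_obj (wbar (Suc t) 0 \<omega>) - global_obj (wbar t 0 \<omega>) \<le> (\<Sum>k<E. quad_model_incr t k \<omega>)" for t
  proof -
    have "global_obj (wbar (Suc t) 0 \<omega>) - global_obj (wbar t 0 \<omega>)
        = (\<Sum>k<E. global_obj (wbar t (Suc k) \<omega>) - global_obj (wbar t k \<omega>))"
      using sum_lessThan_telescope[of "\<lambda>k. global_obj (wbar t k \<omega>)" E] wbar_Suc_0[OF assms] by simp
    also have "\<dots> \<le> (\<Sum>k<E. quad_model_incr t k \<omega>)"
      using global_obj_upper_bound unfolding quad_model_incr_def by (intro sum_mono) (simp add: algebra_simps)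
    finally show ?thesis .
  qed
  have "global_obj (wbar T 0 \<omega>) - global_obj (wbar 0 0 \<omega>)
      = (\<Sum>t<T. global_obj (wbar (Suc t) 0 \<omega>) - global_obj (wbar t 0 \<omega>))"
    using sum_lessThan_telescope[of "\<lambda>t. global_obj (wbar t 0 \<omega>)" T] by simp
  also have "\<dots> \<le> (\<Sum>t<T. \<Sum>k<E. quad_model_incr t k \<omega>)"
    by (intro sum_mono round)
  finally show ?thesis
    using lower[of "wbar T 0 \<omega>"] wbar_0_0[OF assms] unfolding global_obj_def by simp
qed

lemma global_obj_gap_le_sum_integral_quad_model_incr:
  "f_inf - global_obj w0 \<le> (\<Sum>t<T. \<Sum>k<E. \<integral>\<omega>. quad_model_incr t k \<omega> \<partial>M)"
proof -
  have "f_inf - global_obj w0 = (\<integral>\<omega>. f_inf - global_obj w0 \<partial>M)"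
    using prob_space.prob_space[OF prob] by simp
  also have "\<dots> \<le> (\<integral>\<omega>. (\<Sum>t<T. \<Sum>k<E. quad_model_incr t k \<omega>) \<partial>M)"
    by (intro integral_mono Bochner_Integration.integrable_sum quad_model_incr_integrable
        global_obj_gap_le_sum_quad_model_incr) auto
  also have "\<dots> = (\<Sum>t<T. \<integral>\<omega>. (\<Sum>k<E. quad_model_incr t k \<omega>) \<partial>M)"
    by (intro Bochner_Integration.integral_sum Bochner_Integration.integrable_sum
        quad_model_incr_integrable) auto
  also have "\<dots> = (\<Sum>t<T. \<Sum>k<E. \<integral>\<omega>. quad_model_incr t k \<omega> \<partial>M)"
    by (intro sum.cong refl Bochner_Integration.integral_sum quad_model_incr_integrable) auto
  finally show ?thesis .
qed

lemma sum_integral_grad_sq_le: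
  defines "c \<equiv> \<alpha>\<^sup>2 * \<gamma> + L * \<alpha>\<^sup>2 * \<gamma>\<^sup>2 + 2 * \<gamma> * L\<^sup>2"
  shows "\<gamma> / 4 * (\<Sum>t<T. \<Sum>k<E. \<integral>\<omega>. (norm (global_grad (wbar t k \<omega>)))\<^sup>2 \<partial>M)
    \<le> (global_obj w0 - f_inf) + real T * (c * \<gamma>\<^sup>2 * G\<^sup>2 * (real E)^3 / 3)
      + real T * real E * (L * \<gamma>\<^sup>2 / 2 * ((\<Sum>i<C. (p i)\<^sup>2) * \<sigma>\<^sup>2))"
proof -
  define I where "I t k = (\<integral>\<omega>. (norm (global_grad (wbar t k \<omega>)))\<^sup>2 \<partial>M)" for t k
  define V where "V = L * \<gamma>\<^sup>2 / 2 * ((\<Sum>i<C. (p i)\<^sup>2) * \<sigma>\<^sup>2)"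
  have c: "c \<ge> 0"
    unfolding c_def using step_size_pos L_nonneg by simp
  have "(\<Sum>t<T. \<Sum>k<E. \<integral>\<omega>. quad_model_incr t k \<omega> \<partial>M)
      \<le> (\<Sum>t<T. \<Sum>k<E. - \<gamma> / 4 * I t k + c * (\<gamma>\<^sup>2 * (real k)\<^sup>2 * G\<^sup>2) + V)"
    unfolding c_def I_def V_def by (intro sum_mono integral_quad_model_incr_le) simp
  also have "\<dots> = - \<gamma> / 4 * (\<Sum>t<T. \<Sum>k<E. I t k) + real T * (c * \<gamma>\<^sup>2 * G\<^sup>2 * (\<Sum>k<E. (real k)\<^sup>2))
      + real T * real E * V"
  proof -
    have grad: "(\<Sum>t<T. \<Sum>k<E. - \<gamma> / 4 * I t k) = - \<gamma> / 4 * (\<Sum>t<T. \<Sum>k<E. I t k)"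
      by (simp add: sum_distrib_left)
    have drift: "(\<Sum>t<T. \<Sum>k<E. c * (\<gamma>\<^sup>2 * (real k)\<^sup>2 * G\<^sup>2))
        = real T * (c * \<gamma>\<^sup>2 * G\<^sup>2 * (\<Sum>k<E. (real k)\<^sup>2))"
      by (simp add: sum_distrib_left mult_ac)
    have noise: "(\<Sum>t<T. \<Sum>k<E. V) = real T * real E * V"
      by simp
    show ?thesis
      by (simp only: sum.distrib grad drift noise)
  qed
  also have "real T * (c * \<gamma>\<^sup>2 * G\<^sup>2 * (\<Sum>k<E. (real k)\<^sup>2)) \<le> real T * (c * \<gamma>\<^sup>2 * G\<^sup>2 * (real E)^3 / 3)"
  proof -
    have "(\<Sum>k<E. (real k)\<^sup>2) \<le> (real E)^3 / 3"
      using sum_lessThan_squares_le[of E] by simp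
    then have "c * \<gamma>\<^sup>2 * G\<^sup>2 * (\<Sum>k<E. (real k)\<^sup>2) \<le> c * \<gamma>\<^sup>2 * G\<^sup>2 * ((real E)^3 / 3)"
      using c by (intro mult_left_mono) auto
    from mult_left_mono[OF this, of "real T"] show ?thesis
      by simp
  qed
  finally show ?thesis
    using global_obj_gap_le_sum_integral_quad_model_incr unfolding I_def V_def by linarith
qed

end

theorem (in fedprox) convergence_rate:
  "ennreal (1 / (real T * real E)) *
     (\<Sum>t<T. \<Sum>k<E. \<integral>\<^sup>+ \<omega>. ennreal ((norm (\<Sum>i<C. p i *\<^sub>R gradF i (avg_iter C p w t k \<omega>)))\<^sup>2) \<partial>M)
   \<le> ennreal (
       1 / sqrt (real T) *
         (8 * (\<alpha> + L) * ((\<Sum>i<C. p i * F i w0) - f_inf) / sqrt (real E)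
          + L * (\<Sum>i<C. (p i)\<^sup>2) * \<sigma>\<^sup>2 / ((\<alpha> + L) * sqrt (real E))
          + \<alpha> * real E powr (3/2) * G\<^sup>2 / (\<alpha> + L))
       + 2 * L\<^sup>2 * real E * G\<^sup>2 / ((\<alpha> + L)\<^sup>2 * real T)
       + \<alpha>\<^sup>2 * L * sqrt (real E) * G\<^sup>2 / (16 * (\<alpha> + L) ^ 3 * real T powr (3/2)))"
proof -
  define s where "s = sqrt (real T)"
  define e where "e = sqrt (real E)"
  define X where "X = (\<Sum>t<T. \<Sum>k<E. \<integral>\<omega>. (norm (global_grad (wbar t k \<omega>)))\<^sup>2 \<partial>M)"
  have s: "s \<ge> 1" and e: "e \<ge> 1" and T: "real T = s\<^sup>2" and E: "real E = e\<^sup>2"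
    using T_ge E_ge by (simp_all add: s_def e_def)
  have "(\<integral>\<^sup>+ \<omega>. ennreal ((norm (\<Sum>i<C. p i *\<^sub>R gradF i (wbar t k \<omega>)))\<^sup>2) \<partial>M)
      = ennreal (\<integral>\<omega>. (norm (global_grad (wbar t k \<omega>)))\<^sup>2 \<partial>M)" if "k < E" for t k
    unfolding global_grad_def[symmetric] using that
    by (intro nn_integral_eq_integral sq_integrableD(2) global_grad_wbar_sq_integrable) auto
  then have lhs: "ennreal (1 / (real T * real E)) *
      (\<Sum>t<T. \<Sum>k<E. \<integral>\<^sup>+ \<omega>. ennreal ((norm (\<Sum>i<C. p i *\<^sub>R gradF i (wbar t k \<omega>)))\<^sup>2) \<partial>M)
      = ennreal (X / (s\<^sup>2 * e\<^sup>2))"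
    unfolding X_def T E by (simp add: sum_nonneg ennreal_mult[symmetric])
  have \<gamma>: "\<gamma> = 1 / (2 * (\<alpha> + L) * (s * e))"
    unfolding step s_def e_def by (simp add: real_sqrt_mult)
  have "\<gamma> / 4 * X \<le> (global_obj w0 - f_inf)
      + s\<^sup>2 * ((\<alpha>\<^sup>2 * \<gamma> + L * \<alpha>\<^sup>2 * \<gamma>\<^sup>2 + 2 * \<gamma> * L\<^sup>2) * \<gamma>\<^sup>2 * G\<^sup>2 * (e\<^sup>2) ^ 3 / 3)
      + s\<^sup>2 * e\<^sup>2 * (L * \<gamma>\<^sup>2 / 2 * ((\<Sum>i<C. (p i)\<^sup>2) * \<sigma>\<^sup>2))"
    using sum_integral_grad_sq_le unfolding X_def T E .
  from fedprox_rate_arith[OF alpha_pos L_nonneg s e zero_le_power2 \<gamma> this]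
  have rate: "X / (s\<^sup>2 * e\<^sup>2) \<le> 1 / s * (8 * (\<alpha> + L) * (global_obj w0 - f_inf) / e
      + L * ((\<Sum>i<C. (p i)\<^sup>2) * \<sigma>\<^sup>2) / ((\<alpha> + L) * e) + \<alpha> * e ^ 3 * G\<^sup>2 / (\<alpha> + L))
      + 2 * L\<^sup>2 * e\<^sup>2 * G\<^sup>2 / ((\<alpha> + L)\<^sup>2 * s\<^sup>2) + \<alpha>\<^sup>2 * L * e * G\<^sup>2 / (16 * (\<alpha> + L) ^ 3 * s ^ 3)" .
  have powr_E: "real E powr (3/2) = e ^ 3" and powr_T: "real T powr (3/2) = s ^ 3"
    by (simp_all add: powr_three_halves s_def e_def power3_eq_cube)
  show ?thesis
    unfolding lhs powr_E powr_T s_def[symmetric] e_def[symmetric] unfolding T E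
    using rate by (intro ennreal_leI) (simp add: global_obj_def mult_ac)
qed

theorem theorem2:
  fixes M :: "'m measure"
    and Filt :: "nat \<Rightarrow> nat \<Rightarrow> 'm measure"
    and C E T :: nat
    and p :: "nat \<Rightarrow> real"
    and F :: "nat \<Rightarrow> 'a::euclidean_space \<Rightarrow> real"
    and gradF :: "nat \<Rightarrow> 'a \<Rightarrow> 'a"
    and w g :: "nat \<Rightarrow> nat \<Rightarrow> nat \<Rightarrow> 'm \<Rightarrow> 'a"
    and w0 :: 'a
    and \<alpha> \<gamma> L \<sigma> G f_inf :: real
  assumes prob: "prob_space M"
    and weights_nonneg: "\<And>i. i < C \<Longrightarrow> p i \<ge> 0"
    and weights_sum: "(\<Sum>i<C. p i) = 1"
    and alpha_pos: "\<alpha> > 0"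
    and E_ge: "E \<ge> 1"
    and T_ge: "T \<ge> 1"
    and step: "\<gamma> = 1 / (2 * (\<alpha> + L) * sqrt (real T * real E))"
    \<comment> \<open>gradients and L-smoothness\<close>
    and grad: "\<And>i x. i < C \<Longrightarrow> (F i has_derivative (\<lambda>h. gradF i x \<bullet> h)) (at x)"
    and smooth: "\<And>i x y. i < C \<Longrightarrow> norm (gradF i x - gradF i y) \<le> L * norm (x - y)"
    \<comment> \<open>lower-bounded global objective\<close>
    and lower: "\<And>x. (\<Sum>i<C. p i * F i x) \<ge> f_inf"
    \<comment> \<open>FedProx dynamics\<close>
    and init: "\<And>i \<omega>. i < C \<Longrightarrow> \<omega> \<in> space M \<Longrightarrow> w i 0 0 \<omega> = w0"
    and restart: "\<And>i t \<omega>. i < C \<Longrightarrow> \<omega> \<in> space M \<Longrightarrow>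
        w i (Suc t) 0 \<omega> = avg_iter C p w t E \<omega>"
    and update: "\<And>i t k \<omega>. i < C \<Longrightarrow> k < E \<Longrightarrow> \<omega> \<in> space M \<Longrightarrow>
        w i t (Suc k) \<omega> = (1 - \<alpha> * \<gamma>) *\<^sub>R w i t k \<omega> + (\<alpha> * \<gamma>) *\<^sub>R avg_iter C p w t 0 \<omega>
                          - \<gamma> *\<^sub>R g i t k \<omega>"
    \<comment> \<open>the past: a filtration containing all earlier stochastic gradients\<close>
    and g_meas: "\<And>i t k. i < C \<Longrightarrow> k < E \<Longrightarrow> g i t k \<in> borel_measurable M"
    and filt_sub: "\<And>t k. subalgebra M (Filt t k)"
    and filt_past: "\<And>j t k t' k'. j < C \<Longrightarrow> k' < E \<Longrightarrow> before (t', k') (t, k) \<Longrightarrow>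
        g j t' k' \<in> borel_measurable (Filt t k)"
    \<comment> \<open>unbiasedness given the past (componentwise conditional expectation)\<close>
    and unbiased: "\<And>i t k b. i < C \<Longrightarrow> k < E \<Longrightarrow> b \<in> Basis \<Longrightarrow>
        AE \<omega> in M. real_cond_exp M (Filt t k) (\<lambda>\<omega>. g i t k \<omega> \<bullet> b) \<omega> = gradF i (w i t k \<omega>) \<bullet> b"
    \<comment> \<open>independence across clients given the past\<close>
    and cond_indep: "\<And>t k f. k < E \<Longrightarrow>
        (\<forall>i<C. f i \<in> borel_measurable borel \<and> (\<exists>B. \<forall>x. \<bar>f i x\<bar> \<le> B)) \<Longrightarrow>
        AE \<omega> in M. real_cond_exp M (Filt t k) (\<lambda>\<omega>. \<Prod>i<C. f i (g i t k \<omega>)) \<omega>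
                   = (\<Prod>i<C. real_cond_exp M (Filt t k) (\<lambda>\<omega>. f i (g i t k \<omega>)) \<omega>)"
    \<comment> \<open>bounded variance and bounded second moment\<close>
    and variance: "\<And>i t k. i < C \<Longrightarrow> k < E \<Longrightarrow>
        (\<integral>\<^sup>+ \<omega>. ennreal ((norm (g i t k \<omega> - gradF i (w i t k \<omega>)))\<^sup>2) \<partial>M) \<le> ennreal (\<sigma>\<^sup>2)"
    and second_moment: "\<And>i t k. i < C \<Longrightarrow> k < E \<Longrightarrow>
        (\<integral>\<^sup>+ \<omega>. ennreal ((norm (g i t k \<omega>))\<^sup>2) \<partial>M) \<le> ennreal (G\<^sup>2)"
  shows "ennreal (1 / (real T * real E)) *
           (\<Sum>t<T. \<Sum>k<E. \<integral>\<^sup>+ \<omega>. ennreal ((norm (\<Sum>i<C. p i *\<^sub>R gradF i (avg_iter C p w t k \<omega>)))\<^sup>2) \<partial>M)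
         \<le> ennreal (
             1 / sqrt (real T) *
               (8 * (\<alpha> + L) * ((\<Sum>i<C. p i * F i w0) - f_inf) / sqrt (real E)
                + L * (\<Sum>i<C. (p i)\<^sup>2) * \<sigma>\<^sup>2 / ((\<alpha> + L) * sqrt (real E))
                + \<alpha> * real E powr (3/2) * G\<^sup>2 / (\<alpha> + L))
             + 2 * L\<^sup>2 * real E * G\<^sup>2 / ((\<alpha> + L)\<^sup>2 * real T)
             + \<alpha>\<^sup>2 * L * sqrt (real E) * G\<^sup>2 / (16 * (\<alpha> + L) ^ 3 * real T powr (3/2)))"
proof -
  interpret fedprox M Filt C E T p F gradF w g w0 \<alpha> \<gamma> L \<sigma> G f_inf
    by (rule fedprox.intro) (fact assms)+
  show ?thesis
    by (rule convergence_rate)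
qed

end
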